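(* Let $P$ be the Petersen graph and $\mathcal{N}P$ its normal graph algebra over a field $\mathbb{F}$ of characteristic not $2$, with sets $\mathcal{F}_1,\dots,\mathcal{F}_6$ as defined in the context. Every automorphism of $\mathcal{N}P$ permutes the six sets $\mathcal{F}_1,\dots,\mathcal{F}_6$, and the resulting homomorphism from $\mathrm{aut}\,\mathcal{N}P$ to the symmetric group on $\{\mathcal{F}_1,\dots,\mathcal{F}_6\}$ is surjective with kernel the group $\mathbb{F}^{\#}_P$ of scalar automorphisms. Thus $\mathrm{aut}\,\mathcal{N}P/\mathbb{F}^{\#}_P\cong\mathrm{Sym}(6)$, acting on $\{\mathcal{F}_1,\dots,\mathcal{F}_6\}$.
   Context: The Petersen graph $P$ has as vertices the 2-element subsets $\{i,j\}$ of $\{1,\dots,5\}$, two vertices adjacent iff disjoint. $\mathcal{N}P=U_P\oplus\mathfrak{Z}_P$ with $U_P$ having basis the vertices and $\mathfrak{Z}_P$ basis the edges, commutative bilinear product determined by: for distinct vertices $x,y$, $xy$ is the edge joining them if adjacent and $0$ otherwise; $x^2$ is the sum of the three edges at $x$; products involving $\mathfrak{Z}_P$ are $0$. For $1\le i\le5$, $u_i=\frac12\left(\sum_{i\notin A}A-\sum_{i\in A}A\right)$, sums over vertices $A$. For distinct $i,j\in\{1,\dots,6\}$, $\mathbf{ij}$ denotes the vertex $\{i,j\}$ if $i,j\le5$ and $u_i$ if $j=6$ (symmetrically). $\mathcal{F}_i=\{\langle\mathbf{ij}\rangle: j\ne i\}$ for $1\le i\le6$. An automorphism of $\mathcal{N}P$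 is a product-preserving linear bijection mapping $U_P$ onto $U_P$ and $\mathfrak{Z}_P$ onto $\mathfrak{Z}_P$; $\mathrm{aut}\,\mathcal{N}P$ is the group of these; a scalar automorphism is $u\mapsto\alpha u$ on $U_P$, $\mathfrak{z}\mapsto\alpha^2\mathfrak{z}$ on $\mathfrak{Z}_P$, for some $\alpha\neq0$. *)

theory Defs
  imports "HOL-Algebra.Bij" "HOL-Algebra.Coset"
begin

typedef pvert = "{A::nat set. A \<subseteq> {1..5} \<and> card A = 2}"
  by (rule exI[of _ "{1,2}"]) auto

typedef pedge = "{S::pvert set. \<exists>A B. S = {A, B} \<and> Rep_pvert A \<inter> Rep_pvert B = {}}"
proof -
  have a: "Rep_pvert (Abs_pvert {1,2}) = {1,2}" by (rule Abs_pvert_inverse) auto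
  have b: "Rep_pvert (Abs_pvert {3,4}) = {3,4}" by (rule Abs_pvert_inverse) auto
  show ?thesis
  proof
    show "{Abs_pvert {1,2}, Abs_pvert {3,4}} \<in> {S. \<exists>A B. S = {A, B} \<and> Rep_pvert A \<inter> Rep_pvert B = {}}"
      using a b by (intro CollectI exI[of _ "Abs_pvert {1,2}"] exI[of _ "Abs_pvert {3,4}"]) simp
  qed
qed

text \<open>U_P = functions on vertices (coordinates w.r.t. the vertex basis),
  Z_P = functions on edges (coordinates w.r.t. the edge basis).\<close>
type_synonym 'a np = "(pvert \<Rightarrow> 'a) \<times> (pedge \<Rightarrow> 'a)"

definition np_add :: "'a::field np \<Rightarrow> 'a np \<Rightarrow> 'a np" where
  "np_add x y = (\<lambda>A. fst x A + fst y A, \<lambda>e. snd x e + snd y e)"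

definition np_scale :: "'a::field \<Rightarrow> 'a np \<Rightarrow> 'a np" where
  "np_scale c x = (\<lambda>A. c * fst x A, \<lambda>e. c * snd x e)"

text \<open>Bilinear extension of: x y = edge xy if adjacent, 0 otherwise (x \<noteq> y);
  x^2 = sum of the three edges at x; products with Z_P vanish.\<close>
definition np_mult :: "'a::field np \<Rightarrow> 'a np \<Rightarrow> 'a np" where
  "np_mult x y = (\<lambda>_. 0,
     \<lambda>e. (\<Sum>A\<in>Rep_pedge e. fst x A) * (\<Sum>B\<in>Rep_pedge e. fst y B))"

definition U_P :: "'a::field np set" where
  "U_P = {x. snd x = (\<lambda>_. 0)}"

definition Z_P :: "'a::field np set" where
  "Z_P = {x. fst x = (\<lambda>_. 0)}"

definition autNP :: "('a::field np \<Rightarrow> 'a np) set" where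
  "autNP = {\<phi>. bij \<phi>
      \<and> (\<forall>x y. \<phi> (np_add x y) = np_add (\<phi> x) (\<phi> y))
      \<and> (\<forall>c x. \<phi> (np_scale c x) = np_scale c (\<phi> x))
      \<and> \<phi> ` U_P = U_P \<and> \<phi> ` Z_P = Z_P
      \<and> (\<forall>x y. \<phi> (np_mult x y) = np_mult (\<phi> x) (\<phi> y))}"

definition AutNP :: "('a::field np \<Rightarrow> 'a np) monoid" where
  "AutNP = \<lparr>carrier = autNP, mult = (\<circ>), one = id\<rparr>"

definition scalar_aut :: "'a::field \<Rightarrow> 'a np \<Rightarrow> 'a np" where
  "scalar_aut \<alpha> x = (\<lambda>A. \<alpha> * fst x A, \<lambda>e. \<alpha>^2 * snd x e)"

definition scalar_auts :: "('a::field np \<Rightarrow> 'a np) set" where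
  "scalar_auts = {scalar_aut \<alpha> | \<alpha>. \<alpha> \<noteq> 0}"

definition vtx :: "pvert \<Rightarrow> 'a::field np" where
  "vtx A = (\<lambda>B. if B = A then 1 else 0, \<lambda>_. 0)"

definition u_el :: "nat \<Rightarrow> 'a::field np" where
  "u_el i = (\<lambda>A. if i \<in> Rep_pvert A then - (1/2) else 1/2, \<lambda>_. 0)"

definition bold :: "nat \<Rightarrow> nat \<Rightarrow> 'a::field np" where
  "bold i j = (if i \<le> 5 \<and> j \<le> 5 then vtx (Abs_pvert {i, j})
               else if j = 6 then u_el i else u_el j)"

definition span1 :: "'a::field np \<Rightarrow> 'a np set" where
  "span1 x = {np_scale c x | c. True}"

definition FF :: "nat \<Rightarrow> 'a::field np set set" where
  "FF i = {span1 (bold i j) | j. j \<in> {1..6} \<and> j \<noteq> i}"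

definition FFs :: "'a::field np set set set" where
  "FFs = FF ` {1..6}"

definition lines_img :: "('a np \<Rightarrow> 'a np) \<Rightarrow> 'a np set set \<Rightarrow> 'a np set set" where
  "lines_img \<phi> S = (\<lambda>L. \<phi> ` L) ` S"

definition rhoF :: "('a::field np \<Rightarrow> 'a np) \<Rightarrow> 'a np set set \<Rightarrow> 'a np set set" where
  "rhoF \<phi> = restrict (lines_img \<phi>) FFs"

end

(* Let \<phi> be an automorphism. For every vertex A the square of \<phi> A has at most three nonzero
   edge coordinates: the sets of edges supporting these squares meet exactly when the vertices are
   adjacent, and the Petersen graph is triangle-free. A case analysis shows that such elements are
   multiples of a vertex or of some u_k, i.e. of one of the fifteen elements ij.
   Edges of P correspond to synthemes of {1,...,6}, and the square of ij is supported on the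
   synthemes containing the duad {i,j}; hence, for distinct duads, ij\<cdot>kl = 0 iff they meet.
   Relabelling vertices realises Sym(5) and an explicit automorphism exchanges the labels 5 and 6,
   so every line \<langle>ij\<rangle> is the image of a vertex line, and automorphisms permute the fifteen lines
   preserving the meeting of duads. Five pairwise meeting duads share a point, so each F_i is
   mapped to some F_k, and every permutation of the F_i arises. An automorphism fixing every F_i
   fixes every line \<langle>ij\<rangle>; comparing it on the vertices and on u_1 shows that it is scalar. *)

theory Submission
  imports Defs "HOL-Combinatorics.Permutations"
begin

section \<open>The Petersen graph\<close>

definition vert :: "nat \<Rightarrow> nat \<Rightarrow> pvert" where
  "vert i j = Abs_pvert {i, j}"

definition edge :: "pvert \<Rightarrow> pvert \<Rightarrow> pedge" where
  "edge A B = Abs_pedge {A, B}"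

abbreviation adjacent :: "pvert \<Rightarrow> pvert \<Rightarrow> bool" where
  "adjacent A B \<equiv> Rep_pvert A \<inter> Rep_pvert B = {}"

lemma Rep_pvert_subset: "Rep_pvert A \<subseteq> {1..5}"
  and card_Rep_pvert: "card (Rep_pvert A) = 2"
  using Rep_pvert[of A] by auto

lemma finite_Rep_pvert [simp]: "finite (Rep_pvert A)"
  using Rep_pvert_subset finite_subset by blast

lemma Rep_vert: "i \<noteq> j \<Longrightarrow> i \<in> {1..5} \<Longrightarrow> j \<in> {1..5} \<Longrightarrow> Rep_pvert (vert i j) = {i, j}"
  unfolding vert_def by (rule Abs_pvert_inverse) auto

lemma pvert_cases:
  obtains i j where "i \<noteq> j" "i \<in> {1..5}" "j \<in> {1..5}" "A = vert i j"
proof -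
  obtain i j where ij: "i \<noteq> j" "Rep_pvert A = {i, j}"
    using card_Rep_pvert[of A] card_2_iff by metis
  then have "i \<in> {1..5}" "j \<in> {1..5}" using Rep_pvert_subset[of A] by auto
  moreover have "A = vert i j" unfolding vert_def using ij(2) by (metis Rep_pvert_inverse)
  ultimately show thesis using that ij(1) by blast
qed

lemma vert_commute: "vert i j = vert j i"
  unfolding vert_def by (simp add: insert_commute)

lemma vert_eq_iff:
  "i \<noteq> j \<Longrightarrow> i \<in> {1..5} \<Longrightarrow> j \<in> {1..5} \<Longrightarrow> k \<noteq> l \<Longrightarrow> k \<in> {1..5} \<Longrightarrow> l \<in> {1..5} \<Longrightarrow>
   vert i j = vert k l \<longleftrightarrow> {i, j} = {k, l}"
  by (metis Rep_vert vert_def)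

lemma adjacent_neq: "adjacent A B \<Longrightarrow> A \<noteq> B"
  using card_Rep_pvert[of A] by auto

lemma Rep_edge: "adjacent A B \<Longrightarrow> Rep_pedge (edge A B) = {A, B}"
  unfolding edge_def by (rule Abs_pedge_inverse) auto

lemma pedge_cases:
  obtains A B where "adjacent A B" "e = edge A B"
proof -
  obtain A B where "Rep_pedge e = {A, B}" "adjacent A B" using Rep_pedge[of e] by auto
  then show thesis using that unfolding edge_def by (metis Rep_pedge_inverse)
qed

lemma edge_commute: "edge A B = edge B A"
  unfolding edge_def by (simp add: insert_commute)

lemma edge_eq_iff: "adjacent A B \<Longrightarrow> adjacent C D \<Longrightarrow> edge A B = edge C D \<longleftrightarrow> {A, B} = {C, D}"
  by (metis Rep_edge edge_def)

instance pvert :: finite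
proof
  have eq: "(UNIV :: pvert set) = Abs_pvert ` {A. A \<subseteq> {1..5} \<and> card A = 2}"
    using type_definition.Abs_image[OF type_definition_pvert] by simp
  have "finite {A::nat set. A \<subseteq> {1..5} \<and> card A = 2}"
    by (rule finite_subset[of _ "Pow {1..5}"]) auto
  then show "finite (UNIV :: pvert set)" by (subst eq) (rule finite_imageI)
qed

instance pedge :: finite
proof
  have eq: "(UNIV :: pedge set) = Abs_pedge ` {S. \<exists>A B. S = {A, B} \<and> adjacent A B}"
    using type_definition.Abs_image[OF type_definition_pedge] by simp
  have "finite {S::pvert set. \<exists>A B. S = {A, B} \<and> adjacent A B}"
    by (rule finite_subset[of _ UNIV]) auto
  then show "finite (UNIV :: pedge set)" by (subst eq) (rule finite_imageI)
qed

lemma Petersen_triangle_free: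
  assumes "adjacent A B" "adjacent A C" "adjacent B C"
  shows False
proof -
  have "card (Rep_pvert A \<union> Rep_pvert B \<union> Rep_pvert C) = 6"
    using assms by (simp add: card_Un_disjoint Int_Un_distrib2 card_Rep_pvert)
  moreover have "Rep_pvert A \<union> Rep_pvert B \<union> Rep_pvert C \<subseteq> {1..5}"
    using Rep_pvert_subset by blast
  then have "card (Rep_pvert A \<union> Rep_pvert B \<union> Rep_pvert C) \<le> card {1..5::nat}"
    by (intro card_mono) auto
  ultimately show False by simp
qed

lemma card_edges_at: "card {e. A \<in> Rep_pedge e} \<le> 3"
proof -
  obtain i j where ij: "i \<noteq> j" "i \<in> {1..5}" "j \<in> {1..5}" "A = vert i j"
    by (rule pvert_cases)
  have "card ({1..5::nat} - {i, j}) = 3" using ij by (simp add: card_Diff_subset)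
  then obtain k l p where klp: "{1..5::nat} - {i, j} = {k, l, p}" "k \<noteq> l" "l \<noteq> p" "k \<noteq> p"
    using card_3_iff by metis
  let ?g = "[edge A (vert k l), edge A (vert k p), edge A (vert l p)]"
  have "e \<in> set ?g" if "A \<in> Rep_pedge e" for e
  proof -
    obtain C D where CD: "adjacent C D" "e = edge C D" by (rule pedge_cases)
    with that have "A = C \<or> A = D" by (simp add: Rep_edge)
    with CD obtain B where B: "adjacent A B" "e = edge A B"
      by (metis edge_commute Int_commute)
    obtain s t where st: "s \<noteq> t" "s \<in> {1..5}" "t \<in> {1..5}" "B = vert s t"
      by (rule pvert_cases)
    have "Rep_pvert A = {i, j}" "Rep_pvert B = {s, t}" using ij st by (simp_all add: Rep_vert)
    with B(1) have "{s, t} \<inter> {i, j} = {}" by blast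
    then have "{s, t} \<subseteq> {k, l, p}" using st klp(1) by blast
    then have "B \<in> {vert k l, vert k p, vert l p}" using st by (auto simp: vert_commute)
    then show ?thesis using B(2) by auto
  qed
  then have "card {e. A \<in> Rep_pedge e} \<le> card (set ?g)" by (intro card_mono) auto
  also have "\<dots> \<le> 3" using card_length[of ?g] by simp
  finally show ?thesis .
qed

section \<open>Automorphisms\<close>

definition edge_sum :: "(pvert \<Rightarrow> 'a::comm_monoid_add) \<Rightarrow> pedge \<Rightarrow> 'a" where
  "edge_sum v e = (\<Sum>A\<in>Rep_pedge e. v A)"

lemma edge_sum_edge: "adjacent A B \<Longrightarrow> edge_sum v (edge A B) = v A + v B"
  unfolding edge_sum_def by (simp add: Rep_edge adjacent_neq)

lemma edge_sum_scale: "edge_sum (\<lambda>A. (c::'a::semiring_0) * v A) e = c * edge_sum v e"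
  unfolding edge_sum_def by (simp add: sum_distrib_left)

lemma np_mult_edge_sum: "np_mult x y = (\<lambda>_. 0, \<lambda>e. edge_sum (fst x) e * edge_sum (fst y) e)"
  unfolding np_mult_def edge_sum_def by simp

definition np_zero :: "'a::field np" where
  "np_zero = (\<lambda>_. 0, \<lambda>_. 0)"

lemma np_scale_zero: "np_scale 0 x = np_zero"
  unfolding np_scale_def np_zero_def by simp

lemma np_scale_one: "np_scale 1 x = x"
  unfolding np_scale_def by simp

lemma np_scale_scale: "np_scale c (np_scale d x) = np_scale (c * d) x"
  unfolding np_scale_def by (simp add: mult.assoc)

lemma np_scale_eq_zero_iff: "np_scale c x = np_zero \<longleftrightarrow> c = 0 \<or> x = np_zero"
  unfolding np_scale_def np_zero_def by (auto simp: fun_eq_iff prod_eq_iff)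

lemma np_mult_scale: "np_mult (np_scale c x) (np_scale d y) = np_scale (c * d) (np_mult x y)"
  unfolding np_mult_def np_scale_def by (auto simp: fun_eq_iff sum_distrib_left[symmetric] algebra_simps)

lemma span1_eq_range: "span1 x = range (\<lambda>c. np_scale c x)"
  unfolding span1_def by auto

lemma span1_self: "x \<in> span1 x"
  unfolding span1_eq_range using np_scale_one[of x] by (metis rangeI)

lemma span1_scale: "c \<noteq> 0 \<Longrightarrow> span1 (np_scale c x) = span1 x"
  unfolding span1_def
proof (auto simp: np_scale_scale)
  fix d assume "c \<noteq> 0"
  then have "np_scale d x = np_scale ((d / c) * c) x" by simp
  then show "\<exists>e. np_scale d x = np_scale (e * c) x" by blast
qed

lemma autNP_I:
  assumes "bij \<phi>" "\<And>x y. \<phi> (np_add x y) = np_add (\<phi> x) (\<phi> y)"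
    "\<And>c x. \<phi> (np_scale c x) = np_scale c (\<phi> x)" "\<phi> ` U_P = U_P" "\<phi> ` Z_P = Z_P"
    "\<And>x y. \<phi> (np_mult x y) = np_mult (\<phi> x) (\<phi> y)"
  shows "\<phi> \<in> autNP"
  using assms unfolding autNP_def by blast

context
  fixes \<phi> :: "'a::field np \<Rightarrow> 'a np"
  assumes aut: "\<phi> \<in> autNP"
begin

lemma aut_bij: "bij \<phi>"
  and aut_add: "\<phi> (np_add x y) = np_add (\<phi> x) (\<phi> y)"
  and aut_scale: "\<phi> (np_scale c x) = np_scale c (\<phi> x)"
  and aut_image_U: "\<phi> ` U_P = U_P"
  and aut_image_Z: "\<phi> ` Z_P = Z_P"
  and aut_mult: "\<phi> (np_mult x y) = np_mult (\<phi> x) (\<phi> y)"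
  using aut unfolding autNP_def mem_Collect_eq by (simp_all del: split_paired_All)

lemma aut_zero: "\<phi> np_zero = np_zero"
  using aut_scale[of 0 np_zero] by (simp add: np_scale_zero)

lemma aut_eq_iff: "\<phi> x = \<phi> y \<longleftrightarrow> x = y"
  using aut_bij by (simp add: bij_is_inj inj_eq)

lemma aut_eq_zero_iff: "\<phi> x = np_zero \<longleftrightarrow> x = np_zero"
  using aut_eq_iff aut_zero by metis

lemma aut_in_U: "x \<in> U_P \<Longrightarrow> \<phi> x \<in> U_P"
  using aut_image_U by blast

lemma aut_image_span1: "\<phi> ` span1 x = span1 (\<phi> x)"
  by (simp add: span1_eq_range image_image aut_scale)

lemma aut_inv_apply: "inv_into UNIV \<phi> (\<phi> x) = x" "\<phi> (inv_into UNIV \<phi> x) = x"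
  using aut_bij by (simp_all add: bij_is_inj bij_is_surj surj_f_inv_f)

lemma aut_inv: "inv_into UNIV \<phi> \<in> autNP"
proof (rule autNP_I)
  let ?\<psi> = "inv_into UNIV \<phi>"
  show "bij ?\<psi>" using aut_bij by (rule bij_imp_bij_inv)
  show "?\<psi> ` U_P = U_P" using aut_image_U aut_bij by (metis bij_is_inj image_inv_f_f)
  show "?\<psi> ` Z_P = Z_P" using aut_image_Z aut_bij by (metis bij_is_inj image_inv_f_f)
  show "?\<psi> (np_add x y) = np_add (?\<psi> x) (?\<psi> y)" for x y
    by (metis aut_inv_apply aut_add)
  show "?\<psi> (np_scale c x) = np_scale c (?\<psi> x)" for c x
    by (metis aut_inv_apply aut_scale)
  show "?\<psi> (np_mult x y) = np_mult (?\<psi> x) (?\<psi> y)" for x y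
    by (metis aut_inv_apply aut_mult)
qed

end

lemma aut_comp:
  assumes "\<phi> \<in> autNP" "\<psi> \<in> autNP"
  shows "\<phi> \<circ> \<psi> \<in> autNP"
proof (rule autNP_I)
  show "bij (\<phi> \<circ> \<psi>)" using assms aut_bij bij_comp by blast
  show "(\<phi> \<circ> \<psi>) ` U_P = U_P" using assms by (simp only: image_comp[symmetric] aut_image_U)
  show "(\<phi> \<circ> \<psi>) ` Z_P = Z_P" using assms by (simp only: image_comp[symmetric] aut_image_Z)
qed (simp_all add: assms aut_add aut_scale aut_mult)

lemma aut_id: "id \<in> autNP"
  by (rule autNP_I) auto

lemma aut_of_involution:
  fixes \<psi> :: "(pvert \<Rightarrow> 'a::field) \<Rightarrow> (pvert \<Rightarrow> 'a)" and \<pi> :: "pedge \<Rightarrow> pedge"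
  assumes add: "\<And>v w. \<psi> (\<lambda>A. v A + w A) = (\<lambda>A. \<psi> v A + \<psi> w A)"
    and scale: "\<And>c v. \<psi> (\<lambda>A. c * v A) = (\<lambda>A. c * \<psi> v A)"
    and \<psi>_\<psi>: "\<And>v. \<psi> (\<psi> v) = v" and \<pi>_\<pi>: "\<And>e. \<pi> (\<pi> e) = e"
    and edge_sum_\<psi>: "\<And>v e. edge_sum (\<psi> v) e = edge_sum v (\<pi> e)"
  shows "(\<lambda>x. (\<psi> (fst x), snd x \<circ> \<pi>)) \<in> autNP"
proof -
  let ?F = "\<lambda>x::'a np. (\<psi> (fst x), snd x \<circ> \<pi>)"
  have \<psi>_zero: "\<psi> (\<lambda>_. 0) = (\<lambda>_. 0)" using scale[of 0] by simp
  have FF: "?F (?F x) = x" for x by (simp add: o_def \<psi>_\<psi> \<pi>_\<pi>)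
  have image_eq: "?F ` X = X" if "\<And>x. x \<in> X \<Longrightarrow> ?F x \<in> X" for X
    using that FF by (metis (no_types, lifting) image_subset_iff subsetI subset_antisym imageI)
  show ?thesis
  proof (rule autNP_I)
    show "bij ?F" by (rule o_bij[where g = ?F]) (rule ext, simp only: o_apply FF id_apply)+
    show "?F (np_add x y) = np_add (?F x) (?F y)" for x y
      unfolding np_add_def using add by (simp add: o_def)
    show "?F (np_scale c x) = np_scale c (?F x)" for c x
      unfolding np_scale_def using scale by (simp add: o_def)
    show "?F (np_mult x y) = np_mult (?F x) (?F y)" for x y
      unfolding np_mult_edge_sum using \<psi>_zero edge_sum_\<psi> by (simp add: o_def)
    show "?F ` U_P = U_P" by (rule image_eq) (simp add: U_P_def o_def)
    show "?F ` Z_P = Z_P" by (rule image_eq) (simp add: Z_P_def \<psi>_zero)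
  qed
qed

lemma scalar_aut_autNP:
  fixes \<alpha> :: "'a::field"
  assumes "\<alpha> \<noteq> 0"
  shows "scalar_aut \<alpha> \<in> autNP"
proof (rule autNP_I)
  have inverse: "scalar_aut (inverse \<alpha>) (scalar_aut \<alpha> x) = x"
    "scalar_aut \<alpha> (scalar_aut (inverse \<alpha>) x) = x" for x
    using assms unfolding scalar_aut_def by (auto simp: power2_eq_square field_simps)
  have image_eq: "scalar_aut \<alpha> ` X = X"
    if "\<And>x. x \<in> X \<Longrightarrow> scalar_aut \<alpha> x \<in> X" "\<And>x. x \<in> X \<Longrightarrow> scalar_aut (inverse \<alpha>) x \<in> X"
    for X :: "'a np set"
    using that inverse by (metis (no_types, lifting) image_subset_iff subsetI subset_antisym imageI)
  show "bij (scalar_aut \<alpha>)"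
    by (rule o_bij[where g = "scalar_aut (inverse \<alpha>)"]) (rule ext, simp only: o_apply inverse id_apply)+
  show "scalar_aut \<alpha> (np_add x y) = np_add (scalar_aut \<alpha> x) (scalar_aut \<alpha> y)" for x y
    unfolding np_add_def scalar_aut_def by (simp add: algebra_simps)
  show "scalar_aut \<alpha> (np_scale c x) = np_scale c (scalar_aut \<alpha> x)" for c x
    unfolding np_scale_def scalar_aut_def by (simp add: algebra_simps)
  show "scalar_aut \<alpha> (np_mult x y) = np_mult (scalar_aut \<alpha> x) (scalar_aut \<alpha> y)" for x y
    unfolding np_mult_def scalar_aut_def by (simp add: algebra_simps power2_eq_square sum_distrib_left)
  show "scalar_aut \<alpha> ` U_P = U_P" by (rule image_eq) (simp_all add: U_P_def scalar_aut_def)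
  show "scalar_aut \<alpha> ` Z_P = Z_P" by (rule image_eq) (simp_all add: Z_P_def scalar_aut_def)
qed

lemma scalar_aut_U: "x \<in> U_P \<Longrightarrow> scalar_aut \<alpha> x = np_scale \<alpha> x"
  unfolding scalar_aut_def np_scale_def U_P_def by auto

definition edge_vec :: "pedge \<Rightarrow> 'a::field np" where
  "edge_vec e = (\<lambda>_. 0, \<lambda>f. if f = e then 1 else 0)"

lemma vtx_in_U: "vtx A \<in> U_P"
  unfolding vtx_def U_P_def by simp

lemma vtx_neq_zero: "vtx A \<noteq> np_zero"
  unfolding vtx_def np_zero_def by (auto simp: fun_eq_iff)

lemma edge_sum_vtx: "edge_sum (fst (vtx A :: 'a::field np)) e = (if A \<in> Rep_pedge e then 1 else 0)"
proof (cases e rule: pedge_cases)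
  case (1 C D)
  then show ?thesis using adjacent_neq[OF 1(1)] by (auto simp: edge_sum_edge vtx_def Rep_edge)
qed

lemma np_mult_vtx_adjacent:
  assumes "adjacent A B"
  shows "np_mult (vtx A) (vtx B) = (edge_vec (edge A B) :: 'a::field np)"
proof -
  have "A \<in> Rep_pedge f \<and> B \<in> Rep_pedge f \<longleftrightarrow> f = edge A B" for f
  proof (cases f rule: pedge_cases)
    case (1 C D)
    then show ?thesis using assms adjacent_neq[OF assms] by (auto simp: Rep_edge edge_eq_iff)
  qed
  then show ?thesis unfolding np_mult_edge_sum edge_vec_def by (auto simp: fun_eq_iff edge_sum_vtx)
qed

lemma np_mult_vtx_nonadjacent:
  assumes "A \<noteq> B" "\<not> adjacent A B"
  shows "np_mult (vtx A) (vtx B) = (np_zero :: 'a::field np)"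
proof -
  have "\<not> (A \<in> Rep_pedge f \<and> B \<in> Rep_pedge f)" for f
    using assms by (cases f rule: pedge_cases) (auto simp: Rep_edge Int_commute)
  then show ?thesis unfolding np_mult_edge_sum np_zero_def by (auto simp: fun_eq_iff edge_sum_vtx)
qed

lemma edge_vec_neq_zero: "edge_vec e \<noteq> np_zero"
  unfolding edge_vec_def np_zero_def by (auto simp: fun_eq_iff)

definition np_sum :: "('b \<Rightarrow> 'a::field np) \<Rightarrow> 'b set \<Rightarrow> 'a np" where
  "np_sum f S = (\<lambda>A. \<Sum>s\<in>S. fst (f s) A, \<lambda>e. \<Sum>s\<in>S. snd (f s) e)"

lemma aut_np_sum:
  assumes "\<phi> \<in> autNP" "finite S"
  shows "\<phi> (np_sum f S) = np_sum (\<phi> \<circ> f) S"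
  using assms(2)
proof (induction rule: finite_induct)
  case empty
  have "np_sum g {} = np_zero" for g :: "'b \<Rightarrow> 'a np" by (simp add: np_sum_def np_zero_def)
  then show ?case using aut_zero[OF assms(1)] by simp
next
  case (insert s S)
  have "np_sum g (insert s S) = np_add (g s) (np_sum g S)" for g :: "'b \<Rightarrow> 'a np"
    using insert(1,2) by (simp add: np_sum_def np_add_def)
  then show ?case using insert(3) aut_add[OF assms(1)] by simp
qed

lemma U_P_decomp: "x \<in> U_P \<Longrightarrow> x = np_sum (\<lambda>A. np_scale (fst x A) (vtx A)) UNIV"
  unfolding np_sum_def np_scale_def vtx_def U_P_def
  by (auto simp: prod_eq_iff fun_eq_iff if_distrib cong: if_cong)

lemma Z_P_decomp: "x \<in> Z_P \<Longrightarrow> x = np_sum (\<lambda>e. np_scale (snd x e) (edge_vec e)) UNIV"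
  unfolding np_sum_def np_scale_def edge_vec_def Z_P_def
  by (auto simp: prod_eq_iff fun_eq_iff if_distrib cong: if_cong)

lemma np_add_U_Z: "x = np_add (fst x, \<lambda>_. 0) (\<lambda>_. 0, snd x)" "(fst x, \<lambda>_. 0) \<in> U_P" "(\<lambda>_. 0, snd x) \<in> Z_P"
  unfolding np_add_def U_P_def Z_P_def by simp_all

lemma aut_U_expand:
  assumes "\<phi> \<in> autNP" "x \<in> U_P"
  shows "\<phi> x = np_sum (\<lambda>A. np_scale (fst x A) (\<phi> (vtx A))) UNIV"
proof -
  from U_P_decomp[OF assms(2)] have "\<phi> x = \<phi> (np_sum (\<lambda>A. np_scale (fst x A) (vtx A)) UNIV)"
    by (rule arg_cong)
  also have "\<dots> = np_sum (\<lambda>A. np_scale (fst x A) (\<phi> (vtx A))) UNIV"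
    by (simp add: aut_np_sum[OF assms(1)] aut_scale[OF assms(1)] o_def)
  finally show ?thesis .
qed

lemma aut_Z_expand:
  assumes "\<phi> \<in> autNP" "x \<in> Z_P"
  shows "\<phi> x = np_sum (\<lambda>e. np_scale (snd x e) (\<phi> (edge_vec e))) UNIV"
proof -
  from Z_P_decomp[OF assms(2)] have "\<phi> x = \<phi> (np_sum (\<lambda>e. np_scale (snd x e) (edge_vec e)) UNIV)"
    by (rule arg_cong)
  also have "\<dots> = np_sum (\<lambda>e. np_scale (snd x e) (\<phi> (edge_vec e))) UNIV"
    by (simp add: aut_np_sum[OF assms(1)] aut_scale[OF assms(1)] o_def)
  finally show ?thesis .
qed

lemma aut_eqI_vtx:
  fixes \<phi> \<psi> :: "'a::field np \<Rightarrow> 'a np"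
  assumes \<phi>: "\<phi> \<in> autNP" and \<psi>: "\<psi> \<in> autNP" and eq: "\<And>A. \<phi> (vtx A) = \<psi> (vtx A)"
  shows "\<phi> = \<psi>"
proof
  fix x :: "'a np"
  have "\<phi> (edge_vec e) = \<psi> (edge_vec e)" for e
  proof (cases e rule: pedge_cases)
    case (1 C D)
    then show ?thesis by (simp add: np_mult_vtx_adjacent[symmetric] aut_mult[OF \<phi>] aut_mult[OF \<psi>] eq)
  qed
  then have "\<phi> (\<lambda>_. 0, snd x) = \<psi> (\<lambda>_. 0, snd x)"
    by (simp add: aut_Z_expand[OF \<phi> np_add_U_Z(3)] aut_Z_expand[OF \<psi> np_add_U_Z(3)])
  moreover have "\<phi> (fst x, \<lambda>_. 0) = \<psi> (fst x, \<lambda>_. 0)"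
    by (simp add: aut_U_expand[OF \<phi> np_add_U_Z(2)] aut_U_expand[OF \<psi> np_add_U_Z(2)] eq)
  moreover have split: "\<chi> x = np_add (\<chi> (fst x, \<lambda>_. 0)) (\<chi> (\<lambda>_. 0, snd x))" if "\<chi> \<in> autNP" for \<chi>
    using np_add_U_Z(1)[of x] aut_add[OF that] by (metis (no_types))
  ultimately show "\<phi> x = \<psi> x" using split[OF \<phi>] split[OF \<psi>] by simp
qed

section \<open>Elements whose square has at most three terms\<close>

definition edge_avoids :: "pedge \<Rightarrow> nat \<Rightarrow> bool" where
  "edge_avoids e m \<longleftrightarrow> (\<forall>A\<in>Rep_pedge e. m \<notin> Rep_pvert A)"

lemma edge_avoids_unique:
  assumes "edge_avoids e m" "edge_avoids e m'" "m \<in> {1..5}" "m' \<in> {1..5}"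
  shows "m = m'"
proof (rule ccontr)
  assume "m \<noteq> m'"
  obtain A B where AB: "adjacent A B" "e = edge A B" by (rule pedge_cases)
  have "card (Rep_pvert A \<union> Rep_pvert B) = 4"
    using AB(1) by (simp add: card_Un_disjoint card_Rep_pvert)
  moreover have "Rep_pvert A \<union> Rep_pvert B \<subseteq> {1..5} - {m, m'}"
    using assms AB Rep_pvert_subset[of A] Rep_pvert_subset[of B]
    unfolding edge_avoids_def by (auto simp: Rep_edge)
  then have "card (Rep_pvert A \<union> Rep_pvert B) \<le> card ({1..5::nat} - {m, m'})"
    by (intro card_mono) auto
  moreover have "card ({1..5::nat} - {m, m'}) = 3"
    using \<open>m \<noteq> m'\<close> assms(3,4) by (simp add: card_Diff_subset)
  ultimately show False by simp
qed

lemma edge_avoids_neq: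
  "edge_avoids e i \<Longrightarrow> edge_avoids e' j \<Longrightarrow> i \<noteq> j \<Longrightarrow> i \<in> {1..5} \<Longrightarrow> j \<in> {1..5} \<Longrightarrow> e \<noteq> e'"
  using edge_avoids_unique by blast

lemma adjacent_vert:
  "distinct [i, j, k, l] \<Longrightarrow> {i, j, k, l} \<subseteq> {1..5} \<Longrightarrow> adjacent (vert i j) (vert k l)"
  by (simp add: Rep_vert)

lemma edge_sum_vert_edge:
  "distinct [i, j, k, l] \<Longrightarrow> {i, j, k, l} \<subseteq> {1..5} \<Longrightarrow>
   edge_sum x (edge (vert i j) (vert k l)) = x (vert i j) + x (vert k l)"
  by (simp add: edge_sum_edge adjacent_vert)

lemma edge_avoids_vert_edge:
  "distinct [i, j, k, l] \<Longrightarrow> {i, j, k, l} \<subseteq> {1..5} \<Longrightarrow> m \<notin> {i, j, k, l} \<Longrightarrow>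
   edge_avoids (edge (vert i j) (vert k l)) m"
  unfolding edge_avoids_def by (simp add: Rep_edge adjacent_vert Rep_vert)

lemma edge_vert_swap_neq:
  assumes "distinct [i, j, k, l]" "{i, j, k, l} \<subseteq> {1..5}"
  shows "edge (vert i k) (vert j l) \<noteq> edge (vert i l) (vert j k)"
proof
  assume eq: "edge (vert i k) (vert j l) = edge (vert i l) (vert j k)"
  have "adjacent (vert i k) (vert j l)" "adjacent (vert i l) (vert j k)"
    using assms by (simp_all add: adjacent_vert)
  with eq have "{vert i k, vert j l} = {vert i l, vert j k}" by (metis Rep_edge)
  then have "vert i k \<in> {vert i l, vert j k}" by blast
  moreover have "vert i k \<noteq> vert i l" "vert i k \<noteq> vert j k"
    using assms by (simp_all add: vert_eq_iff doubleton_eq_iff)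
  ultimately show False by blast
qed

lemma two_points_avoided_by_no_support:
  fixes s :: "pedge \<Rightarrow> 'a::zero"
  assumes small: "card {e. s e \<noteq> 0} \<le> 3"
  obtains m n where "m \<noteq> n" "m \<in> {1..5}" "n \<in> {1..5}"
    "\<And>e. edge_avoids e m \<Longrightarrow> s e = 0" "\<And>e. edge_avoids e n \<Longrightarrow> s e = 0"
proof -
  \<comment> \<open>Every edge avoids exactly one point, so at most three points are avoided by support edges.\<close>
  define N where "N = {m \<in> {1..5::nat}. \<exists>e. edge_avoids e m \<and> s e \<noteq> 0}"
  define f where "f m = (SOME e. edge_avoids e m \<and> s e \<noteq> 0)" for m
  have f: "edge_avoids (f m) m \<and> s (f m) \<noteq> 0" if "m \<in> N" for m
  proof -
    from that obtain e where "edge_avoids e m \<and> s e \<noteq> 0" unfolding N_def by blast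
    then show ?thesis unfolding f_def by (rule someI)
  qed
  have "inj_on f N"
  proof (rule inj_onI)
    fix m m' assume "m \<in> N" "m' \<in> N" "f m = f m'"
    with f[of m] f[of m'] edge_avoids_unique[of "f m" m m'] show "m = m'"
      unfolding N_def by auto
  qed
  then have "card N = card (f ` N)" by (simp add: card_image)
  also have "\<dots> \<le> card {e. s e \<noteq> 0}" using f by (intro card_mono) auto
  finally have "card N \<le> 3" using small by simp
  moreover have "N \<subseteq> {1..5}" unfolding N_def by auto
  ultimately have "card ({1..5::nat} - N) \<ge> 2" by (simp add: card_Diff_subset finite_subset)
  then obtain m n where "m \<in> {1..5} - N" "n \<in> {1..5} - N" "m \<noteq> n"
    using card_le_Suc0_iff_eq[of "{1..5::nat} - N"] by auto
  with that show thesis unfolding N_def by auto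
qed

lemma five_points_of_small_support:
  fixes s :: "pedge \<Rightarrow> 'a::zero"
  assumes small: "card {e. s e \<noteq> 0} \<le> 3"
  obtains a b c m n where "distinct [a, b, c, m, n]" "{a, b, c, m, n} = {1..5}"
    "\<And>e. edge_avoids e m \<Longrightarrow> s e = 0" "\<And>e. edge_avoids e n \<Longrightarrow> s e = 0"
proof -
  obtain m n where mn: "m \<noteq> n" "m \<in> {1..5}" "n \<in> {1..5}"
    and clear: "\<And>e. edge_avoids e m \<Longrightarrow> s e = 0" "\<And>e. edge_avoids e n \<Longrightarrow> s e = 0"
    using two_points_avoided_by_no_support[OF small] by blast
  have "card ({1..5::nat} - {m, n}) = 3" using mn by (simp add: card_Diff_subset)
  then obtain a b c where abc: "{1..5::nat} - {m, n} = {a, b, c}" "a \<noteq> b" "b \<noteq> c" "a \<noteq> c"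
    using card_3_iff by metis
  have "a \<notin> {m, n}" "b \<notin> {m, n}" "c \<notin> {m, n}" using abc(1) by blast+
  with abc(2-4) mn(1) have distinct: "distinct [a, b, c, m, n]" by simp
  have "{a, b, c, m, n} = {a, b, c} \<union> {m, n}" by blast
  also have "\<dots> = {1..5}" using abc(1) mn(2,3) by blast
  finally show thesis by (rule that[OF distinct _ clear])
qed

lemma four_support_edges_False:
  fixes s :: "pedge \<Rightarrow> 'a::zero"
  assumes "card {e. s e \<noteq> 0} \<le> 3" "distinct [e1, e2, e3, e4]"
    "s e1 \<noteq> 0" "s e2 \<noteq> 0" "s e3 \<noteq> 0" "s e4 \<noteq> 0"
  shows False
proof -
  have "{e1, e2, e3, e4} \<subseteq> {e. s e \<noteq> 0}" using assms by auto
  then have "card {e1, e2, e3, e4} \<le> card {e. s e \<noteq> 0}" by (intro card_mono) auto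
  with assms show False by simp
qed

lemma pvert_enum:
  assumes "distinct [a, b, c, m, n]" "{a, b, c, m, n} = {1..5}"
  shows "B \<in> {vert a b, vert a c, vert b c, vert a m, vert a n, vert b m, vert b n,
    vert c m, vert c n, vert m n}"
proof -
  obtain i j where ij: "i \<noteq> j" "i \<in> {1..5}" "j \<in> {1..5}" "B = vert i j"
    by (rule pvert_cases)
  then have "i \<in> {a, b, c, m, n}" "j \<in> {a, b, c, m, n}" using assms(2) by auto
  with ij(1,4) show ?thesis by (auto simp: vert_commute)
qed

text \<open>Write \<open>p, q, r\<close> for the coordinates of \<open>x\<close> at \<open>{b,c}, {a,c}, {a,b}\<close>. The edges avoiding \<open>m\<close>
  or \<open>n\<close> force the other coordinates to be \<open>-p, -q, -r\<close> and \<open>x{m,n}\<close>; then the two edges avoiding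
  \<open>a\<close> (resp. \<open>b\<close>, \<open>c\<close>) have coefficient \<open>-(q + r)\<close> (resp. \<open>-(p + r)\<close>, \<open>-(p + q)\<close>), and four
  support edges are impossible.\<close>

context
  fixes x :: "pvert \<Rightarrow> 'a::field" and a b c m n :: nat
  assumes points: "distinct [a, b, c, m, n]" "{a, b, c, m, n} = {1..5}"
    and small: "card {e. edge_sum x e \<noteq> 0} \<le> 3"
    and m_clear: "\<And>e. edge_avoids e m \<Longrightarrow> edge_sum x e = 0"
    and n_clear: "\<And>e. edge_avoids e n \<Longrightarrow> edge_sum x e = 0"
begin

lemma points_range: "a \<in> {1..5}" "b \<in> {1..5}" "c \<in> {1..5}" "m \<in> {1..5}" "n \<in> {1..5}"
  using points(2) by blast+

lemma points_neq: "a \<noteq> b" "a \<noteq> c" "a \<noteq> m" "a \<noteq> n" "b \<noteq> c" "b \<noteq> m" "b \<noteq> n"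
  "c \<noteq> m" "c \<noteq> n" "m \<noteq> n"
  using points(1) by auto

lemmas points_facts = points_neq points_neq[symmetric] points_range points_range[simplified]

lemma edge_sum_clear:
  assumes "distinct [i, j, k, l]" "{i, j, k, l} \<subseteq> {1..5}" "p \<in> {m, n}" "p \<notin> {i, j, k, l}"
  shows "x (vert k l) = - x (vert i j)"
proof -
  have "edge_avoids (edge (vert i j) (vert k l)) p"
    using assms(1,2,4) by (rule edge_avoids_vert_edge)
  then have "edge_sum x (edge (vert i j) (vert k l)) = 0" using assms(3) m_clear n_clear by auto
  with assms(1,2) show ?thesis by (simp add: edge_sum_vert_edge add_eq_0_iff)
qed

lemma opposite_values:
  "x (vert c n) = - x (vert a b)" "x (vert b n) = - x (vert a c)" "x (vert a n) = - x (vert b c)"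
  "x (vert c m) = - x (vert a b)" "x (vert b m) = - x (vert a c)" "x (vert a m) = - x (vert b c)"
proof -
  show "x (vert c n) = - x (vert a b)" by (rule edge_sum_clear[of a b c n m]) (simp_all add: points_facts)
  show "x (vert b n) = - x (vert a c)" by (rule edge_sum_clear[of a c b n m]) (simp_all add: points_facts)
  show "x (vert a n) = - x (vert b c)" by (rule edge_sum_clear[of b c a n m]) (simp_all add: points_facts)
  show "x (vert c m) = - x (vert a b)" by (rule edge_sum_clear[of a b c m n]) (simp_all add: points_facts)
  show "x (vert b m) = - x (vert a c)" by (rule edge_sum_clear[of a c b m n]) (simp_all add: points_facts)
  show "x (vert a m) = - x (vert b c)" by (rule edge_sum_clear[of b c a m n]) (simp_all add: points_facts)
qed

lemma pair_sums_exclusive: "x (vert b c) + x (vert a c) = 0 \<or> x (vert a c) + x (vert a b) = 0"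
proof (rule ccontr)
  assume "\<not> ?thesis"
  then have nz: "x (vert b c) + x (vert a c) \<noteq> 0" "x (vert a c) + x (vert a b) \<noteq> 0" by auto
  let ?e1 = "edge (vert a m) (vert b n)" and ?e2 = "edge (vert a n) (vert b m)"
  let ?e3 = "edge (vert b m) (vert c n)" and ?e4 = "edge (vert b n) (vert c m)"
  have avoid: "edge_avoids ?e1 c" "edge_avoids ?e2 c" "edge_avoids ?e3 a" "edge_avoids ?e4 a"
    by (simp_all add: edge_avoids_vert_edge points_facts)
  have "?e1 \<noteq> ?e2" "?e3 \<noteq> ?e4"
    using edge_vert_swap_neq[of a b m n] edge_vert_swap_neq[of b c m n] by (simp_all add: points_facts)
  moreover have "?e1 \<noteq> ?e3" "?e1 \<noteq> ?e4" "?e2 \<noteq> ?e3" "?e2 \<noteq> ?e4"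
    using avoid edge_avoids_neq[of _ c _ a] points_facts by auto
  ultimately have "distinct [?e1, ?e2, ?e3, ?e4]" by auto
  moreover have "edge_sum x ?e1 \<noteq> 0" "edge_sum x ?e2 \<noteq> 0" "edge_sum x ?e3 \<noteq> 0" "edge_sum x ?e4 \<noteq> 0"
    using nz by (simp_all add: edge_sum_vert_edge points_facts opposite_values neg_eq_iff_add_eq_0)
  ultimately show False by (rule four_support_edges_False[OF small])
qed

lemma small_square_u_el_case:
  assumes pq: "x (vert b c) + x (vert a c) \<noteq> 0"
    and qr: "x (vert a c) + x (vert a b) = 0" and pr: "x (vert b c) + x (vert a b) = 0"
  shows "x = (\<lambda>B. if c \<in> Rep_pvert B then x (vert b c) else - x (vert b c))"
proof -
  have r: "x (vert a b) = - x (vert b c)" using pr by (simp add: add_eq_0_iff)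
  from qr pr have "x (vert a c) + x (vert a b) = x (vert b c) + x (vert a b)" by simp
  then have q: "x (vert a c) = x (vert b c)" by simp
  have t: "x (vert m n) = - x (vert b c)"
  proof (rule ccontr)
    assume "x (vert m n) \<noteq> - x (vert b c)"
    then have nz: "x (vert b c) + x (vert m n) \<noteq> 0" by (simp add: eq_neg_iff_add_eq_0 add.commute)
    let ?e1 = "edge (vert b c) (vert m n)" and ?e2 = "edge (vert a c) (vert m n)"
    let ?e3 = "edge (vert a m) (vert b n)" and ?e4 = "edge (vert a n) (vert b m)"
    have avoid: "edge_avoids ?e1 a" "edge_avoids ?e2 b" "edge_avoids ?e3 c" "edge_avoids ?e4 c"
      by (simp_all add: edge_avoids_vert_edge points_facts)
    have "?e3 \<noteq> ?e4" using edge_vert_swap_neq[of a b m n] by (simp add: points_facts)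
    moreover have "?e1 \<noteq> ?e2" "?e1 \<noteq> ?e3" "?e1 \<noteq> ?e4" "?e2 \<noteq> ?e3" "?e2 \<noteq> ?e4"
      using avoid edge_avoids_neq points_facts by metis+
    ultimately have "distinct [?e1, ?e2, ?e3, ?e4]" by auto
    moreover have "edge_sum x ?e1 \<noteq> 0" "edge_sum x ?e2 \<noteq> 0" "edge_sum x ?e3 \<noteq> 0" "edge_sum x ?e4 \<noteq> 0"
      using nz pq by (simp_all add: edge_sum_vert_edge points_facts opposite_values q neg_eq_iff_add_eq_0)
    ultimately show False by (rule four_support_edges_False[OF small])
  qed
  show ?thesis
  proof
    fix B
    show "x B = (if c \<in> Rep_pvert B then x (vert b c) else - x (vert b c))"
      using pvert_enum[OF points, of B] by (auto simp: Rep_vert points_facts opposite_values q r t)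
  qed
qed

lemma small_square_vtx_case:
  assumes two: "(2::'a) \<noteq> 0" and pq: "x (vert b c) + x (vert a c) = 0"
    and qr: "x (vert a c) + x (vert a b) = 0" and pr: "x (vert b c) + x (vert a b) = 0"
  shows "x = (\<lambda>B. if B = vert m n then x (vert m n) else 0)"
proof -
  from pq have q: "x (vert a c) = - x (vert b c)" by (simp add: add_eq_0_iff)
  with qr have r: "x (vert a b) = x (vert b c)" by (simp add: add_eq_0_iff)
  with pr have "x (vert b c) + x (vert b c) = 0" by simp
  with two have p: "x (vert b c) = 0" by (metis mult_2 mult_eq_0_iff)
  show ?thesis
  proof
    fix B
    show "x B = (if B = vert m n then x (vert m n) else 0)"
      using pvert_enum[OF points, of B]
      by (auto simp: points_facts opposite_values p q r vert_eq_iff doubleton_eq_iff)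
  qed
qed

end

lemma small_square_classification:
  fixes x :: "pvert \<Rightarrow> 'a::field"
  assumes two: "(2::'a) \<noteq> 0" and small: "card {e. edge_sum x e \<noteq> 0} \<le> 3"
  shows "(\<exists>A t. x = (\<lambda>B. if B = A then t else 0))
    \<or> (\<exists>k\<in>{1..5}. \<exists>p. x = (\<lambda>B. if k \<in> Rep_pvert B then p else - p))"
proof -
  obtain a b c m n where points: "distinct [a, b, c, m, n]" "{a, b, c, m, n} = {1..5}"
    and clear: "\<And>e. edge_avoids e m \<Longrightarrow> edge_sum x e = 0" "\<And>e. edge_avoids e n \<Longrightarrow> edge_sum x e = 0"
    using five_points_of_small_support[OF small] by blast
  from points have rot: "distinct [b, c, a, m, n]" "{b, c, a, m, n} = {1..5}"
    "distinct [c, a, b, m, n]" "{c, a, b, m, n} = {1..5}"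
    by (auto simp only: distinct.simps set_simps insert_commute)
  note ctx = small clear
  let ?p = "x (vert b c)" and ?q = "x (vert a c)" and ?r = "x (vert a b)"
  have excl: "?p + ?q = 0 \<or> ?q + ?r = 0" "?q + ?r = 0 \<or> ?r + ?p = 0" "?r + ?p = 0 \<or> ?p + ?q = 0"
    using pair_sums_exclusive[OF points ctx] pair_sums_exclusive[OF rot(1,2) ctx]
      pair_sums_exclusive[OF rot(3,4) ctx]
    by (simp_all add: vert_commute add.commute)
  have range: "a \<in> {1..5}" "b \<in> {1..5}" "c \<in> {1..5}" using points(2) by blast+
  consider "?p + ?q \<noteq> 0" | "?q + ?r \<noteq> 0" | "?r + ?p \<noteq> 0" | "?p + ?q = 0" "?q + ?r = 0" "?r + ?p = 0"
    by blast
  then show ?thesis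
  proof cases
    case 1
    with excl have "?q + ?r = 0" "?r + ?p = 0" by auto
    with 1 have "x = (\<lambda>B. if c \<in> Rep_pvert B then ?p else - ?p)"
      by (intro small_square_u_el_case[OF points ctx]) (simp_all add: add.commute)
    with range show ?thesis by blast
  next
    case 2
    with excl have "?r + ?p = 0" "?p + ?q = 0" by auto
    with 2 have "x = (\<lambda>B. if a \<in> Rep_pvert B then x (vert c a) else - x (vert c a))"
      by (intro small_square_u_el_case[OF rot(1,2) ctx]) (simp_all add: vert_commute add.commute)
    with range show ?thesis by blast
  next
    case 3
    with excl have "?p + ?q = 0" "?q + ?r = 0" by auto
    with 3 have "x = (\<lambda>B. if b \<in> Rep_pvert B then x (vert a b) else - x (vert a b))"
      by (intro small_square_u_el_case[OF rot(3,4) ctx]) (simp_all add: vert_commute add.commute)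
    with range show ?thesis by blast
  next
    case 4
    then have "x = (\<lambda>B. if B = vert m n then x (vert m n) else 0)"
      by (intro small_square_vtx_case[OF points ctx two]) (simp_all add: add.commute)
    then show ?thesis by blast
  qed
qed

section \<open>Images of vertices under automorphisms\<close>

lemma card_meeting_pattern_le_3:
  fixes S :: "pvert \<Rightarrow> pedge set"
  assumes disjoint: "\<And>A B. A \<noteq> B \<Longrightarrow> \<not> adjacent A B \<Longrightarrow> S A \<inter> S B = {}"
    and meet: "\<And>A B. adjacent A B \<Longrightarrow> S A \<inter> S B \<noteq> {}"
  shows "card (S A) \<le> 3"
proof -
  have no_three: "A = B \<or> A = C \<or> B = C" if "f \<in> S A" "f \<in> S B" "f \<in> S C" for f A B C
  proof (rule ccontr)
    assume "\<not> ?thesis"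
    with that disjoint have "adjacent A B" "adjacent A C" "adjacent B C" by blast+
    then show False by (rule Petersen_triangle_free)
  qed
  \<comment> \<open>\<open>c\<close> is injective because no element lies in three of the sets, hence onto.\<close>
  define c where "c e = (SOME f. \<forall>A\<in>Rep_pedge e. f \<in> S A)" for e
  have c: "c e \<in> S A" if "A \<in> Rep_pedge e" for e A
  proof -
    obtain C D where CD: "adjacent C D" "e = edge C D" by (rule pedge_cases)
    from meet[OF CD(1)] obtain f where "f \<in> S C" "f \<in> S D" by blast
    with CD have "\<forall>A\<in>Rep_pedge e. f \<in> S A" by (simp add: Rep_edge)
    then have "\<forall>A\<in>Rep_pedge e. c e \<in> S A" unfolding c_def by (rule someI)
    with that show ?thesis by blast
  qed
  have endpoint: "A \<in> Rep_pedge e" if "c e \<in> S A" for e A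
  proof -
    obtain C D where CD: "adjacent C D" "e = edge C D" by (rule pedge_cases)
    then have "c e \<in> S C" "c e \<in> S D" "C \<noteq> D" using c adjacent_neq by (auto simp: Rep_edge)
    with that no_three have "A = C \<or> A = D" by blast
    with CD show ?thesis by (auto simp: Rep_edge)
  qed
  have "inj c"
  proof (rule injI)
    fix e e' assume eq: "c e = c e'"
    have "Rep_pedge e' \<subseteq> Rep_pedge e" using c[of _ e'] endpoint[of e] eq by auto
    moreover have "Rep_pedge e \<subseteq> Rep_pedge e'" using c[of _ e] endpoint[of e'] eq by auto
    ultimately show "e = e'" by (simp add: Rep_pedge_inject[symmetric])
  qed
  then have "surj c" by (simp add: finite_UNIV_inj_surj)
  have "S A \<subseteq> c ` {e. A \<in> Rep_pedge e}"
  proof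
    fix f assume "f \<in> S A"
    moreover obtain e where "f = c e" using \<open>surj c\<close> by (metis surjD)
    ultimately show "f \<in> c ` {e. A \<in> Rep_pedge e}" using endpoint by blast
  qed
  then have "card (S A) \<le> card (c ` {e. A \<in> Rep_pedge e})" by (intro card_mono) auto
  also have "\<dots> \<le> card {e. A \<in> Rep_pedge e}" by (rule card_image_le) simp
  also have "\<dots> \<le> 3" by (rule card_edges_at)
  finally show ?thesis .
qed

lemma card_aut_vtx_square_support:
  assumes \<phi>: "\<phi> \<in> autNP"
  shows "card {e. edge_sum (fst (\<phi> (vtx A))) e \<noteq> 0} \<le> 3"
proof -
  define S where "S A = {e. edge_sum (fst (\<phi> (vtx A))) e \<noteq> 0}" for A
  have product: "\<phi> (np_mult (vtx A) (vtx B)) = np_zero \<longleftrightarrow> S A \<inter> S B = {}" for A B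
  proof -
    have "\<phi> (np_mult (vtx A) (vtx B)) = np_mult (\<phi> (vtx A)) (\<phi> (vtx B))" by (rule aut_mult[OF \<phi>])
    then show ?thesis unfolding np_mult_edge_sum np_zero_def S_def by (auto simp: fun_eq_iff)
  qed
  have "card (S A) \<le> 3"
  proof (rule card_meeting_pattern_le_3)
    show "S A \<inter> S B = {}" if "A \<noteq> B" "\<not> adjacent A B" for A B
      using product np_mult_vtx_nonadjacent[OF that] aut_zero[OF \<phi>] by metis
    show "S A \<inter> S B \<noteq> {}" if "adjacent A B" for A B
      using product np_mult_vtx_adjacent[OF that] aut_eq_zero_iff[OF \<phi>] edge_vec_neq_zero by metis
  qed
  then show ?thesis unfolding S_def .
qed

lemma bold_vtx: "i \<in> {1..5} \<Longrightarrow> j \<in> {1..5} \<Longrightarrow> bold i j = vtx (vert i j)"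
  unfolding bold_def vert_def by simp

lemma bold_u_el: "i \<in> {1..5} \<Longrightarrow> bold i 6 = u_el i" "i \<in> {1..5} \<Longrightarrow> bold 6 i = u_el i"
  unfolding bold_def by auto

lemma bold_commute: "i \<in> {1..6} \<Longrightarrow> j \<in> {1..6} \<Longrightarrow> bold i j = bold j i"
  unfolding bold_def by (auto simp: insert_commute)

lemma aut_vtx_scaled_bold:
  fixes \<phi> :: "'a::field np \<Rightarrow> 'a np"
  assumes two: "(2::'a) \<noteq> 0" and \<phi>: "\<phi> \<in> autNP"
  shows "\<exists>i\<in>{1..6}. \<exists>j\<in>{1..6}. i \<noteq> j \<and> (\<exists>t. t \<noteq> 0 \<and> \<phi> (vtx A) = np_scale t (bold i j))"
proof -
  define x where "x = fst (\<phi> (vtx A))"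
  have \<phi>A: "\<phi> (vtx A) = (x, \<lambda>_. 0)"
    using aut_in_U[OF \<phi> vtx_in_U] unfolding x_def U_P_def by (simp add: prod_eq_iff)
  have nz: "x \<noteq> (\<lambda>_. 0)"
    using \<phi>A aut_eq_zero_iff[OF \<phi>] vtx_neq_zero unfolding np_zero_def by metis
  from small_square_classification[OF two card_aut_vtx_square_support[OF \<phi>, of A, folded x_def]]
  show ?thesis
  proof (elim disjE exE bexE)
    fix B t assume x: "x = (\<lambda>C. if C = B then t else 0)"
    with nz have "t \<noteq> 0" by auto
    moreover obtain i j where ij: "i \<noteq> j" "i \<in> {1..5}" "j \<in> {1..5}" "B = vert i j"
      by (rule pvert_cases)
    moreover have "\<phi> (vtx A) = np_scale t (bold i j)"
      using \<phi>A x ij by (simp add: bold_vtx np_scale_def vtx_def fun_eq_iff)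
    ultimately show ?thesis using ij by (intro bexI[of _ i] bexI[of _ j] conjI exI[of _ t]) auto
  next
    fix k p assume k: "k \<in> {1..5}" and x: "x = (\<lambda>B. if k \<in> Rep_pvert B then p else - p)"
    with nz have "- 2 * p \<noteq> 0" using two by auto
    moreover have "\<phi> (vtx A) = np_scale (- 2 * p) (bold k 6)"
      using \<phi>A x k two by (simp add: bold_u_el np_scale_def u_el_def fun_eq_iff)
    ultimately show ?thesis using k by (intro bexI[of _ k] bexI[of _ 6] conjI exI[of _ "- 2 * p"]) auto
  qed
qed

section \<open>Automorphisms permuting the labels\<close>

definition relabels :: "('a::field np \<Rightarrow> 'a np) \<Rightarrow> (nat \<Rightarrow> nat) \<Rightarrow> bool" where
  "relabels \<psi> p \<longleftrightarrow> \<psi> \<in> autNP \<and> p permutes {1..6} \<and>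
     (\<forall>i\<in>{1..6}. \<forall>j\<in>{1..6}. i \<noteq> j \<longrightarrow> \<psi> (bold i j) = bold (p i) (p j))"

lemma relabels_comp:
  assumes "relabels \<psi> p" "relabels \<psi>' p'"
  shows "relabels (\<psi> \<circ> \<psi>') (p \<circ> p')"
proof -
  have p': "p' permutes {1..6}" using assms(2) unfolding relabels_def by blast
  then have "p' i \<in> {1..6}" if "i \<in> {1..6}" for i using that permutes_in_image by metis
  moreover have "p' i \<noteq> p' j" if "i \<noteq> j" for i j using p' that by (metis permutes_inj injD)
  ultimately show ?thesis using assms unfolding relabels_def by (auto simp: aut_comp permutes_compose)
qed

context
  fixes \<sigma> :: "nat \<Rightarrow> nat"
  assumes \<sigma>: "\<sigma> permutes {1..5}" and \<sigma>_\<sigma>: "\<And>i. \<sigma> (\<sigma> i) = i"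
begin

definition relabel_vert :: "pvert \<Rightarrow> pvert" where
  "relabel_vert A = Abs_pvert (\<sigma> ` Rep_pvert A)"

definition relabel_edge :: "pedge \<Rightarrow> pedge" where
  "relabel_edge e = Abs_pedge (relabel_vert ` Rep_pedge e)"

definition relabel_aut :: "'a::field np \<Rightarrow> 'a np" where
  "relabel_aut x = (fst x \<circ> relabel_vert, snd x \<circ> relabel_edge)"

lemma mem_image_involution_iff: "i \<in> \<sigma> ` R \<longleftrightarrow> \<sigma> i \<in> R"
  by (metis \<sigma>_\<sigma> image_iff)

lemma Rep_relabel_vert: "Rep_pvert (relabel_vert A) = \<sigma> ` Rep_pvert A"
proof -
  have "\<sigma> ` Rep_pvert A \<subseteq> {1..5}" using Rep_pvert_subset[of A] permutes_image[OF \<sigma>] by blast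
  moreover have "card (\<sigma> ` Rep_pvert A) = 2"
    using card_Rep_pvert[of A] permutes_inj[OF \<sigma>] by (simp add: card_image inj_on_subset)
  ultimately show ?thesis unfolding relabel_vert_def by (intro Abs_pvert_inverse) simp
qed

lemma relabel_vert_relabel_vert [simp]: "relabel_vert (relabel_vert A) = A"
  by (simp add: Rep_pvert_inject[symmetric] Rep_relabel_vert image_image \<sigma>_\<sigma>)

lemma relabel_vert_eq_iff: "relabel_vert B = C \<longleftrightarrow> B = relabel_vert C"
  by (metis relabel_vert_relabel_vert)

lemma relabel_vert_vert:
  "i \<in> {1..5} \<Longrightarrow> j \<in> {1..5} \<Longrightarrow> i \<noteq> j \<Longrightarrow> relabel_vert (vert i j) = vert (\<sigma> i) (\<sigma> j)"
  using Rep_vert[of i j] unfolding relabel_vert_def vert_def by simp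

lemma Rep_relabel_edge: "Rep_pedge (relabel_edge e) = relabel_vert ` Rep_pedge e"
proof -
  obtain A B where AB: "adjacent A B" "e = edge A B" by (rule pedge_cases)
  then have "adjacent (relabel_vert A) (relabel_vert B)"
    using permutes_inj[OF \<sigma>] by (simp add: Rep_relabel_vert image_Int[symmetric])
  then show ?thesis unfolding relabel_edge_def using AB by (subst Abs_pedge_inverse) (auto simp: Rep_edge)
qed

lemma relabel_edge_relabel_edge [simp]: "relabel_edge (relabel_edge e) = e"
  by (simp add: Rep_pedge_inject[symmetric] Rep_relabel_edge image_image)

lemma edge_sum_relabel: "edge_sum (\<lambda>A. v (relabel_vert A)) e = edge_sum v (relabel_edge e)"
proof -
  have "inj relabel_vert" by (metis injI relabel_vert_relabel_vert)
  then show ?thesis unfolding edge_sum_def Rep_relabel_edge by (simp add: sum.reindex inj_on_subset)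
qed

lemma relabel_aut_autNP: "(relabel_aut :: 'a::field np \<Rightarrow> 'a np) \<in> autNP"
  unfolding relabel_aut_def
  by (rule aut_of_involution[where \<psi> = "\<lambda>v. v \<circ> relabel_vert"]) (auto simp: o_def edge_sum_relabel)

lemma relabels_relabel_aut: "relabels (relabel_aut :: 'a::field np \<Rightarrow> 'a np) \<sigma>"
  unfolding relabels_def
proof (intro conjI ballI impI)
  show "relabel_aut \<in> autNP" by (rule relabel_aut_autNP)
  show "\<sigma> permutes {1..6}" using \<sigma> by (rule permutes_subset) auto
  have \<sigma>_range: "\<sigma> i \<in> {1..5}" if "i \<in> {1..5}" for i using that permutes_in_image[OF \<sigma>] by blast
  have \<sigma>6: "\<sigma> 6 = 6" using \<sigma> by (simp add: permutes_not_in)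
  have vtx: "relabel_aut (vtx (vert i j)) = vtx (vert (\<sigma> i) (\<sigma> j))"
    if "i \<in> {1..5}" "j \<in> {1..5}" "i \<noteq> j" for i j
    using that unfolding relabel_aut_def vtx_def
    by (simp add: fun_eq_iff o_def relabel_vert_eq_iff relabel_vert_vert)
  have u: "relabel_aut (u_el i) = u_el (\<sigma> i)" for i
    unfolding relabel_aut_def u_el_def by (simp add: fun_eq_iff Rep_relabel_vert mem_image_involution_iff)
  fix i j :: nat assume ij: "i \<in> {1..6}" "j \<in> {1..6}" "i \<noteq> j"
  then consider "i \<in> {1..5}" "j \<in> {1..5}" | "i \<in> {1..5}" "j = 6" | "i = 6" "j \<in> {1..5}" by fastforce
  then show "relabel_aut (bold i j) = bold (\<sigma> i) (\<sigma> j)"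
  proof cases
    case 1
    with ij(3) \<sigma>_range[of i] \<sigma>_range[of j] show ?thesis by (simp add: bold_vtx vtx)
  next
    case 2
    with \<sigma>_range[of i] show ?thesis by (simp add: bold_u_el u \<sigma>6)
  next
    case 3
    with \<sigma>_range[of j] show ?thesis by (simp add: bold_u_el u \<sigma>6)
  qed
qed

end

lemma relabels_transpose_le_5:
  assumes "a \<in> {1..5}" "b \<in> {1..5}"
  shows "\<exists>\<psi> :: 'a::field np \<Rightarrow> 'a np. relabels \<psi> (Transposition.transpose a b)"
proof -
  have "Transposition.transpose a b permutes {1..5}" using assms by (rule permutes_swap_id)
  then show ?thesis using relabels_relabel_aut[of "Transposition.transpose a b"] by auto
qed

lemma Rep_vert_4: "i \<in> {1..4} \<Longrightarrow> j \<in> {1..4} \<Longrightarrow> i \<noteq> j \<Longrightarrow> Rep_pvert (vert i j) = {i, j}"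
  by (simp add: Rep_vert)

lemma Rep_vert_5: "k \<in> {1..4} \<Longrightarrow> Rep_pvert (vert k 5) = {k, 5}"
  by (simp add: Rep_vert)

lemma pvert_cases_5:
  obtains (spoke) k where "k \<in> {1..4}" "B = vert k 5"
  | (inner) i j where "i \<in> {1..4}" "j \<in> {1..4}" "i \<noteq> j" "B = vert i j"
proof -
  obtain i j where ij: "i \<noteq> j" "i \<in> {1..5}" "j \<in> {1..5}" "B = vert i j" by (rule pvert_cases)
  consider "i = 5" | "j = 5" | "i \<in> {1..4}" "j \<in> {1..4}" using ij by fastforce
  then show thesis
  proof cases
    case 1
    with ij show thesis by (intro spoke[of j]) (auto simp: vert_commute)
  next
    case 2
    with ij show thesis by (intro spoke[of i]) auto
  next
    case 3
    with ij show thesis by (intro inner) auto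
  qed
qed

lemma fourth_point:
  assumes "i \<in> {1..4}" "j \<in> {1..4}" "k \<in> {1..4::nat}" "i \<noteq> j" "i \<noteq> k" "j \<noteq> k"
  obtains m where "m \<in> {1..4}" "m \<noteq> i" "m \<noteq> j" "m \<noteq> k" "{1..4} = {i, j, k, m}"
proof -
  have "card ({1..4::nat} - {i, j, k}) = 1" using assms by (simp add: card_Diff_subset)
  then obtain m where m: "{1..4::nat} - {i, j, k} = {m}" using card_1_singletonE by blast
  then have "m \<in> {1..4}" "m \<noteq> i" "m \<noteq> j" "m \<noteq> k" by blast+
  moreover have "{1..4} = {i, j, k, m}" using m assms by blast
  ultimately show thesis using that by blast
qed

lemma pedge_cases_5:
  obtains (inner) i j k l where "i \<in> {1..4}" "j \<in> {1..4}" "k \<in> {1..4}" "l \<in> {1..4}"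
    "distinct [i, j, k, l]" "e = edge (vert i j) (vert k l)" "{1..4} = {i, j, k, l}"
  | (spoke) i j k m where "i \<in> {1..4}" "j \<in> {1..4}" "k \<in> {1..4}" "m \<in> {1..4}"
    "distinct [i, j, k, m]" "e = edge (vert i j) (vert k 5)" "{1..4} = {i, j, k, m}"
proof -
  obtain A B where AB: "adjacent A B" "e = edge A B" by (rule pedge_cases)
  show thesis
  proof (cases A rule: pvert_cases_5)
    case (spoke k)
    then show thesis
    proof (cases B rule: pvert_cases_5)
      case (spoke k')
      with \<open>A = vert k 5\<close> AB(1) \<open>k \<in> {1..4}\<close> show thesis by (simp add: Rep_vert_5)
    next
      case (inner i j)
      with spoke AB have "distinct [i, j, k]" by (auto simp: Rep_vert_4 Rep_vert_5)
      with inner obtain m where "m \<in> {1..4}" "m \<noteq> i" "m \<noteq> j" "m \<noteq> k" "{1..4} = {i, j, k, m}"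
        using \<open>k \<in> {1..4}\<close> by (elim fourth_point[of i j k]) auto
      with that(2)[of i j k m] inner spoke AB \<open>distinct [i, j, k]\<close> show thesis
        by (auto simp: edge_commute)
    qed
  next
    case (inner i j)
    then show thesis
    proof (cases B rule: pvert_cases_5)
      case (spoke k)
      with inner AB have "distinct [i, j, k]" by (auto simp: Rep_vert_4 Rep_vert_5)
      with inner obtain m where "m \<in> {1..4}" "m \<noteq> i" "m \<noteq> j" "m \<noteq> k" "{1..4} = {i, j, k, m}"
        using \<open>k \<in> {1..4}\<close> by (elim fourth_point[of i j k]) auto
      with that(2)[of i j k m] inner spoke AB \<open>distinct [i, j, k]\<close> show thesis by auto
    next
      case inner': (inner k l)
      with inner AB have distinct: "distinct [i, j, k, l]" by (auto simp: Rep_vert_4)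
      moreover have "{i, j, k, l} = {1..4}"
        using distinct inner inner' by (intro card_subset_eq) auto
      ultimately show thesis using that(1)[of i j k l] inner inner' AB by auto
    qed
  qed
qed

lemma vert_5_eq_iff: "k \<in> {1..4} \<Longrightarrow> i \<in> {1..4} \<Longrightarrow> vert k 5 = vert i 5 \<longleftrightarrow> k = i"
  by (subst vert_eq_iff) (auto simp: doubleton_eq_iff)

lemma vert_5_neq_4: "k \<in> {1..4} \<Longrightarrow> i \<in> {1..4} \<Longrightarrow> j \<in> {1..4} \<Longrightarrow> i \<noteq> j \<Longrightarrow> vert k 5 \<noteq> vert i j"
  by (subst vert_eq_iff) (auto simp: doubleton_eq_iff)

lemma fst_vtx: "fst (vtx A :: 'a::field np) = (\<lambda>B. if B = A then 1 else 0)"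
  and snd_vtx: "snd (vtx A :: 'a::field np) = (\<lambda>_. 0)"
  and fst_u_el: "fst (u_el i :: 'a::field np) = (\<lambda>B. if i \<in> Rep_pvert B then - (1/2) else 1/2)"
  and snd_u_el: "snd (u_el i :: 'a::field np) = (\<lambda>_. 0)"
  unfolding vtx_def u_el_def by simp_all

lemma half_add_half: "(2::'a::field) \<noteq> 0 \<Longrightarrow> (x::'a) / 2 + x / 2 = x"
  by (simp add: field_simps)

text \<open>The automorphism realising the transposition of the labels 5 and 6. On vertex coordinates it is
  the linear map sending \<open>{i,5}\<close> to \<open>u\<^sub>i\<close> (\<open>i \<le> 4\<close>) and fixing the vertices inside \<open>{1..4}\<close>;
  on edges it exchanges \<open>{ij, k5}\<close> and \<open>{ij, l5}\<close> for \<open>{i,j,k,l} = {1..4}\<close>.\<close>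

definition spoke_sum :: "(pvert \<Rightarrow> 'a::field) \<Rightarrow> 'a" where
  "spoke_sum v = (\<Sum>k\<in>{1..4}. v (vert k 5))"

definition tau_coord :: "(pvert \<Rightarrow> 'a::field) \<Rightarrow> pvert \<Rightarrow> 'a" where
  "tau_coord v = (\<lambda>B. if 5 \<in> Rep_pvert B then spoke_sum v / 2 - v B
     else v B + spoke_sum v / 2 - (\<Sum>x\<in>Rep_pvert B. v (vert x 5)))"

definition tau_endpoint :: "pedge \<Rightarrow> pvert \<Rightarrow> pvert" where
  "tau_endpoint e A = (if 5 \<in> Rep_pvert A
     then Abs_pvert (insert 5 ({1..5} - \<Union>(Rep_pvert ` Rep_pedge e))) else A)"

definition tau_edge :: "pedge \<Rightarrow> pedge" where
  "tau_edge e = Abs_pedge (tau_endpoint e ` Rep_pedge e)"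

definition tau_aut :: "'a::field np \<Rightarrow> 'a np" where
  "tau_aut x = (tau_coord (fst x), snd x \<circ> tau_edge)"

lemma tau_coord_5: "k \<in> {1..4} \<Longrightarrow> tau_coord v (vert k 5) = spoke_sum v / 2 - v (vert k 5)"
  unfolding tau_coord_def by (simp add: Rep_vert_5)

lemma tau_coord_4: "i \<in> {1..4} \<Longrightarrow> j \<in> {1..4} \<Longrightarrow> i \<noteq> j \<Longrightarrow>
  tau_coord v (vert i j) = v (vert i j) + spoke_sum v / 2 - v (vert i 5) - v (vert j 5)"
  unfolding tau_coord_def by (auto simp: Rep_vert_4)

lemma spoke_sum_eq: "{1..4} = {i, j, k, m::nat} \<Longrightarrow> distinct [i, j, k, m] \<Longrightarrow>
  spoke_sum v = v (vert i 5) + v (vert j 5) + v (vert k 5) + v (vert m 5)"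
  unfolding spoke_sum_def by (simp add: add.assoc)

lemma spoke_sum_expand: "spoke_sum v = v (vert 1 5) + v (vert 2 5) + v (vert 3 5) + v (vert 4 5)"
proof -
  have "{1..4::nat} = {1, 2, 3, 4}" by auto
  then show ?thesis unfolding spoke_sum_def by (simp add: add.assoc)
qed

lemma tau_edge_4:
  assumes "i \<in> {1..4}" "j \<in> {1..4}" "k \<in> {1..4}" "l \<in> {1..4}" "distinct [i, j, k, l]"
  shows "tau_edge (edge (vert i j) (vert k l)) = edge (vert i j) (vert k l)"
proof -
  let ?e = "edge (vert i j) (vert k l)"
  have "adjacent (vert i j) (vert k l)" using assms by (simp add: Rep_vert_4)
  then have "tau_endpoint ?e ` Rep_pedge ?e = Rep_pedge ?e"
    using assms unfolding tau_endpoint_def by (auto simp: Rep_edge Rep_vert_4)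
  then show ?thesis unfolding tau_edge_def by (simp add: Rep_pedge_inverse)
qed

lemma tau_edge_5:
  assumes "i \<in> {1..4}" "j \<in> {1..4}" "k \<in> {1..4}" "m \<in> {1..4}" "distinct [i, j, k, m]"
    "{1..4} = {i, j, k, m}"
  shows "tau_edge (edge (vert i j) (vert k 5)) = edge (vert i j) (vert m 5)"
proof -
  let ?e = "edge (vert i j) (vert k 5)"
  have "adjacent (vert i j) (vert k 5)" using assms by (auto simp: Rep_vert_4 Rep_vert_5)
  then have R: "Rep_pedge ?e = {vert i j, vert k 5}" by (rule Rep_edge)
  have U: "\<Union>(Rep_pvert ` {vert i j, vert k 5}) = {i, j, k, 5}"
    using assms by (auto simp: Rep_vert_4 Rep_vert_5)
  have "{1..5::nat} = insert 5 {1..4}" by auto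
  then have "{1..5::nat} - {i, j, k, 5} = {m}" using assms by auto
  then have "insert 5 ({1..5} - \<Union>(Rep_pvert ` Rep_pedge ?e)) = {m, 5}" using R U by auto
  then have "tau_endpoint ?e (vert k 5) = vert m 5"
    unfolding tau_endpoint_def vert_def using assms by (simp add: Rep_vert_5[unfolded vert_def])
  moreover have "tau_endpoint ?e (vert i j) = vert i j"
    unfolding tau_endpoint_def using assms by (simp add: Rep_vert_4)
  ultimately have "tau_endpoint ?e ` Rep_pedge ?e = {vert i j, vert m 5}" using R by simp
  then show ?thesis unfolding tau_edge_def edge_def by simp
qed

lemma tau_edge_tau_edge: "tau_edge (tau_edge e) = e"
proof (cases e rule: pedge_cases_5)
  case (inner i j k l)
  then show ?thesis using tau_edge_4 by simp
next
  case (spoke i j k m)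
  then have "{1..4} = {i, j, m, k}" by auto
  with spoke show ?thesis using tau_edge_5[of i j k m] tau_edge_5[of i j m k] by auto
qed

lemma edge_sum_tau_coord:
  assumes two: "(2::'a::field) \<noteq> 0"
  shows "edge_sum (tau_coord (v :: pvert \<Rightarrow> 'a)) e = edge_sum v (tau_edge e)"
proof (cases e rule: pedge_cases_5)
  case (inner i j k l)
  have X: "spoke_sum v = v (vert i 5) + v (vert j 5) + v (vert k 5) + v (vert l 5)"
    using inner by (intro spoke_sum_eq) auto
  have "edge_sum (tau_coord v) e = tau_coord v (vert i j) + tau_coord v (vert k l)"
    using inner by (simp add: edge_sum_edge adjacent_vert)
  also have "\<dots> = v (vert i j) + v (vert k l) + (spoke_sum v / 2 + spoke_sum v / 2)
      - v (vert i 5) - v (vert j 5) - v (vert k 5) - v (vert l 5)"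
    using inner by (simp add: tau_coord_4 algebra_simps)
  also have "\<dots> = v (vert i j) + v (vert k l)" by (simp add: half_add_half[OF two] X algebra_simps)
  also have "\<dots> = edge_sum v (tau_edge e)" using inner by (simp add: edge_sum_edge adjacent_vert tau_edge_4)
  finally show ?thesis .
next
  case (spoke i j k m)
  have X: "spoke_sum v = v (vert i 5) + v (vert j 5) + v (vert k 5) + v (vert m 5)"
    using spoke by (intro spoke_sum_eq) auto
  have "edge_sum (tau_coord v) e = tau_coord v (vert i j) + tau_coord v (vert k 5)"
    using spoke by (simp add: edge_sum_edge adjacent_vert)
  also have "\<dots> = v (vert i j) + (spoke_sum v / 2 + spoke_sum v / 2)
      - v (vert i 5) - v (vert j 5) - v (vert k 5)"
    using spoke by (simp add: tau_coord_4 tau_coord_5 algebra_simps)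
  also have "\<dots> = v (vert i j) + v (vert m 5)" by (simp add: half_add_half[OF two] X algebra_simps)
  also have "\<dots> = edge_sum v (tau_edge e)"
  proof -
    have "tau_edge e = edge (vert i j) (vert m 5)" using tau_edge_5[OF spoke(1-5) spoke(7)] spoke(6) by simp
    moreover have "adjacent (vert i j) (vert m 5)" using spoke by (intro adjacent_vert) auto
    ultimately show ?thesis by (simp add: edge_sum_edge)
  qed
  finally show ?thesis .
qed

lemma spoke_sum_tau_coord:
  assumes two: "(2::'a::field) \<noteq> 0"
  shows "spoke_sum (tau_coord (v :: pvert \<Rightarrow> 'a)) = spoke_sum v"
proof -
  have "spoke_sum (tau_coord v)
      = tau_coord v (vert 1 5) + tau_coord v (vert 2 5) + tau_coord v (vert 3 5) + tau_coord v (vert 4 5)"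
    by (rule spoke_sum_expand)
  also have "\<dots> = (spoke_sum v / 2 + spoke_sum v / 2) + (spoke_sum v / 2 + spoke_sum v / 2)
      - (v (vert 1 5) + v (vert 2 5) + v (vert 3 5) + v (vert 4 5))"
    by (simp add: tau_coord_5 algebra_simps)
  also have "\<dots> = spoke_sum v + spoke_sum v - (v (vert 1 5) + v (vert 2 5) + v (vert 3 5) + v (vert 4 5))"
    by (simp only: half_add_half[OF two])
  also have "\<dots> = spoke_sum v" by (simp add: spoke_sum_expand)
  finally show ?thesis .
qed

lemma tau_coord_tau_coord:
  assumes two: "(2::'a::field) \<noteq> 0"
  shows "tau_coord (tau_coord (v :: pvert \<Rightarrow> 'a)) = v"
proof
  fix B
  show "tau_coord (tau_coord v) B = v B"
  proof (cases B rule: pvert_cases_5)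
    case (spoke k)
    then show ?thesis by (simp add: tau_coord_5 spoke_sum_tau_coord[OF two])
  next
    case (inner i j)
    then have "tau_coord (tau_coord v) B
        = tau_coord v (vert i j) + spoke_sum v / 2 - tau_coord v (vert i 5) - tau_coord v (vert j 5)"
      by (simp add: tau_coord_4 spoke_sum_tau_coord[OF two])
    also have "\<dots> = v (vert i j) + (spoke_sum v / 2 + spoke_sum v / 2) - (spoke_sum v / 2 + spoke_sum v / 2)"
      using inner by (simp add: tau_coord_4 tau_coord_5 algebra_simps)
    finally show ?thesis using inner by simp
  qed
qed

lemma tau_coord_add: "tau_coord (\<lambda>A. v A + w A) = (\<lambda>A. tau_coord v A + tau_coord w A)"
  unfolding tau_coord_def spoke_sum_def by (auto simp: sum.distrib algebra_simps add_divide_distrib fun_eq_iff)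

lemma tau_coord_scale: "tau_coord (\<lambda>A. c * v A) = (\<lambda>A. c * tau_coord v A)"
  unfolding tau_coord_def spoke_sum_def by (auto simp: sum_distrib_left[symmetric] algebra_simps fun_eq_iff)

lemma tau_aut_autNP:
  assumes two: "(2::'a::field) \<noteq> 0"
  shows "(tau_aut :: 'a np \<Rightarrow> 'a np) \<in> autNP"
  unfolding tau_aut_def
  by (rule aut_of_involution)
    (simp_all add: tau_coord_add tau_coord_scale tau_coord_tau_coord[OF two] tau_edge_tau_edge
      edge_sum_tau_coord[OF two])

lemma tau_aut_tau_aut: "(2::'a::field) \<noteq> 0 \<Longrightarrow> tau_aut (tau_aut (x :: 'a np)) = x"
  unfolding tau_aut_def by (simp add: tau_coord_tau_coord tau_edge_tau_edge o_def)

lemma tau_aut_vtx_4: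
  assumes "i \<in> {1..4}" "j \<in> {1..4}" "i \<noteq> j"
  shows "tau_aut (vtx (vert i j) :: 'a::field np) = vtx (vert i j)"
proof -
  have X: "spoke_sum (fst (vtx (vert i j) :: 'a np)) = 0"
    unfolding spoke_sum_def fst_vtx using vert_5_neq_4[OF _ assms] by simp
  have "tau_coord (fst (vtx (vert i j) :: 'a np)) B = fst (vtx (vert i j) :: 'a np) B" for B
  proof (cases B rule: pvert_cases_5)
    case (spoke k)
    then show ?thesis using X vert_5_neq_4[OF _ assms] by (simp add: tau_coord_5 fst_vtx)
  next
    case (inner i' j')
    then show ?thesis using X vert_5_neq_4[OF _ assms] by (simp add: tau_coord_def fst_vtx Rep_vert_4)
  qed
  then show ?thesis unfolding tau_aut_def by (simp add: fun_eq_iff snd_vtx o_def vtx_def)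
qed

lemma tau_aut_vtx_5:
  assumes two: "(2::'a::field) \<noteq> 0" and i: "i \<in> {1..4}"
  shows "tau_aut (vtx (vert i 5) :: 'a np) = u_el i"
proof -
  have X: "spoke_sum (fst (vtx (vert i 5) :: 'a np)) = 1"
    using i unfolding spoke_sum_expand fst_vtx by (auto simp: vert_5_eq_iff)
  have "tau_coord (fst (vtx (vert i 5) :: 'a np)) B = fst (u_el i :: 'a np) B" for B
  proof (cases B rule: pvert_cases_5)
    case (spoke k)
    then show ?thesis
      using X i two by (auto simp: tau_coord_5 fst_vtx fst_u_el vert_5_eq_iff Rep_vert_5 field_simps)
  next
    case (inner i' j')
    then show ?thesis using X i two vert_5_neq_4[OF i inner(1-3)]
      by (auto simp: tau_coord_def fst_vtx fst_u_el Rep_vert_4 vert_5_eq_iff field_simps)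
  qed
  then show ?thesis unfolding tau_aut_def by (simp add: fun_eq_iff snd_vtx snd_u_el o_def u_el_def)
qed

lemma tau_aut_u_el:
  assumes two: "(2::'a::field) \<noteq> 0" and i: "i \<in> {1..4}"
  shows "tau_aut (u_el i :: 'a np) = vtx (vert i 5)"
  using tau_aut_tau_aut[OF two] tau_aut_vtx_5[OF two i] by metis

lemma tau_aut_u_el_5:
  assumes two: "(2::'a::field) \<noteq> 0"
  shows "tau_aut (u_el 5 :: 'a np) = u_el 5"
proof -
  have "Rep_pvert (vert k 5) = {k, 5}" if "k \<in> {1, 2, 3, 4}" for k using that by (auto simp: Rep_vert_5)
  then have X: "spoke_sum (fst (u_el 5 :: 'a np)) = - 2"
    using two unfolding spoke_sum_expand fst_u_el by (simp add: field_simps)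
  have "tau_coord (fst (u_el 5 :: 'a np)) B = fst (u_el 5 :: 'a np) B" for B
  proof (cases B rule: pvert_cases_5)
    case (spoke k)
    then show ?thesis using X two by (auto simp: tau_coord_5 fst_u_el Rep_vert_5 field_simps)
  next
    case (inner i' j')
    then show ?thesis using X two by (auto simp: tau_coord_def fst_u_el Rep_vert_4 Rep_vert_5 field_simps)
  qed
  then show ?thesis unfolding tau_aut_def by (simp add: fun_eq_iff snd_u_el o_def u_el_def)
qed

lemma relabels_tau_aut:
  assumes two: "(2::'a::field) \<noteq> 0"
  shows "relabels (tau_aut :: 'a np \<Rightarrow> 'a np) (Transposition.transpose 5 6)"
  unfolding relabels_def
proof (intro conjI ballI impI)
  show "(tau_aut :: 'a np \<Rightarrow> 'a np) \<in> autNP" using tau_aut_autNP[OF two] .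
  show "Transposition.transpose (5::nat) 6 permutes {1..6}" by (auto intro: permutes_swap_id)
  fix i j :: nat assume ij: "i \<in> {1..6}" "j \<in> {1..6}" "i \<noteq> j"
  let ?t = "Transposition.transpose (5::nat) 6"
  have c: "i \<in> {1..4} \<or> i = 5 \<or> i = 6" "j \<in> {1..4} \<or> j = 5 \<or> j = 6" using ij by auto
  have b4: "k \<in> {1..4} \<Longrightarrow> l \<in> {1..4} \<Longrightarrow> bold k l = (vtx (vert k l) :: 'a np)" for k l
    by (simp add: bold_vtx)
  have b5: "k \<in> {1..4} \<Longrightarrow> bold k 5 = (vtx (vert k 5) :: 'a np)"
    "k \<in> {1..4} \<Longrightarrow> bold 5 k = (vtx (vert k 5) :: 'a np)" for k
    by (simp_all add: bold_vtx vert_commute)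
  have b6: "k \<in> {1..5} \<Longrightarrow> bold k 6 = (u_el k :: 'a np)" "k \<in> {1..5} \<Longrightarrow> bold 6 k = (u_el k :: 'a np)" for k
    by (simp_all add: bold_u_el)
  have t4: "k \<in> {1..4} \<Longrightarrow> ?t k = k" for k by auto
  show "tau_aut (bold i j :: 'a np) = bold (?t i) (?t j)"
    using c ij(3) by (elim disjE)
      (auto simp: b4 b5 b6 t4 tau_aut_vtx_4 tau_aut_vtx_5[OF two] tau_aut_u_el[OF two] tau_aut_u_el_5[OF two])
qed

lemma relabels_transpose:
  assumes two: "(2::'a::field) \<noteq> 0" and ab: "a \<in> {1..6}" "b \<in> {1..6}"
  shows "\<exists>\<psi> :: 'a np \<Rightarrow> 'a np. relabels \<psi> (Transposition.transpose a b)"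
proof -
  have to_6: "\<exists>\<psi> :: 'a np \<Rightarrow> 'a np. relabels \<psi> (Transposition.transpose a 6)" if a: "a \<in> {1..5}" for a
  proof (cases "a = 5")
    case True
    then show ?thesis using relabels_tau_aut[OF two] by blast
  next
    case False
    obtain \<psi> :: "'a np \<Rightarrow> 'a np" where \<psi>: "relabels \<psi> (Transposition.transpose a 5)"
      using relabels_transpose_le_5[of a 5] a by auto
    have "relabels (\<psi> \<circ> tau_aut \<circ> \<psi>)
        (Transposition.transpose a 5 \<circ> Transposition.transpose 5 6 \<circ> Transposition.transpose a 5)"
      by (intro relabels_comp relabels_tau_aut[OF two] \<psi>)
    moreover have "Transposition.transpose a 5 \<circ> Transposition.transpose 5 6 \<circ> Transposition.transpose a 5
        = Transposition.transpose a (6::nat)"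
      using transpose_comp_triple[of a 6 5] False a by simp
    ultimately show ?thesis by metis
  qed
  consider "a \<in> {1..5}" "b \<in> {1..5}" | "a \<in> {1..5}" "b = 6" | "a = 6" "b \<in> {1..5}" | "a = 6" "b = 6"
    using ab by fastforce
  then show ?thesis
  proof cases
    case 1
    then show ?thesis by (rule relabels_transpose_le_5)
  next
    case 2
    then show ?thesis using to_6 by blast
  next
    case 3
    then show ?thesis using to_6 by (simp add: transpose_commute)
  next
    case 4
    then show ?thesis using relabels_transpose_le_5[of 1 1] by simp
  qed
qed

section \<open>Synthemes and products of the elements ij\<close>

definition syntheme :: "pedge \<Rightarrow> nat set set" where
  "syntheme e = Rep_pvert ` Rep_pedge e \<union> {{m, 6} | m. m \<in> {1..5} \<and> edge_avoids e m}"

lemma syntheme_edge: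
  assumes "adjacent A B"
  obtains m where "m \<in> {1..5}" "m \<notin> Rep_pvert A" "m \<notin> Rep_pvert B"
    "syntheme (edge A B) = {Rep_pvert A, Rep_pvert B, {m, 6}}"
proof -
  have "card (Rep_pvert A \<union> Rep_pvert B) = 4"
    using assms by (simp add: card_Un_disjoint card_Rep_pvert)
  moreover have "Rep_pvert A \<union> Rep_pvert B \<subseteq> {1..5}" using Rep_pvert_subset by blast
  ultimately have "card ({1..5} - (Rep_pvert A \<union> Rep_pvert B)) = 1"
    by (simp add: card_Diff_subset)
  then obtain m where m: "{1..5} - (Rep_pvert A \<union> Rep_pvert B) = {m}" using card_1_singletonE by blast
  have "m' \<in> {1..5} \<and> edge_avoids (edge A B) m' \<longleftrightarrow> m' = m" for m'
  proof -
    have "m' \<in> {1..5} - (Rep_pvert A \<union> Rep_pvert B) \<longleftrightarrow> m' = m" using m by blast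
    then show ?thesis using assms by (simp add: edge_avoids_def Rep_edge)
  qed
  then have avoiding: "{{m', 6} | m'. m' \<in> {1..5} \<and> edge_avoids (edge A B) m'} = {{m, 6}}"
    by (simp only:) blast
  have "syntheme (edge A B) = {Rep_pvert A, Rep_pvert B, {m, 6}}"
    unfolding syntheme_def Rep_edge[OF assms] avoiding by auto
  moreover have "m \<in> {1..5}" "m \<notin> Rep_pvert A" "m \<notin> Rep_pvert B" using m by blast+
  ultimately show thesis by (rule that[rotated 3])
qed

lemma syntheme_disjoint:
  assumes "D \<in> syntheme e" "D' \<in> syntheme e" "D \<noteq> D'"
  shows "D \<inter> D' = {}"
proof -
  obtain A B where AB: "adjacent A B" "e = edge A B" by (rule pedge_cases)
  then obtain m where m: "m \<notin> Rep_pvert A" "m \<notin> Rep_pvert B"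
    "syntheme e = {Rep_pvert A, Rep_pvert B, {m, 6}}" by (elim syntheme_edge) simp
  have "6 \<notin> Rep_pvert A" "6 \<notin> Rep_pvert B" using Rep_pvert_subset by force+
  with assms AB(1) m show ?thesis by auto
qed

lemma vert_in_syntheme_iff:
  assumes "i \<noteq> j" "i \<in> {1..5}" "j \<in> {1..5}"
  shows "{i, j} \<in> syntheme e \<longleftrightarrow> vert i j \<in> Rep_pedge e"
proof -
  have "inj Rep_pvert" by (rule injI) (simp add: Rep_pvert_inject)
  then have "{i, j} \<in> Rep_pvert ` Rep_pedge e \<longleftrightarrow> vert i j \<in> Rep_pedge e"
    unfolding Rep_vert[OF assms, symmetric] by (rule inj_image_mem_iff)
  moreover have "{i, j} \<notin> {{m, 6} | m. m \<in> {1..5} \<and> edge_avoids e m}"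
    using assms by (auto simp: doubleton_eq_iff)
  ultimately show ?thesis unfolding syntheme_def by blast
qed

lemma six_in_syntheme_iff: "m \<in> {1..5} \<Longrightarrow> {m, 6} \<in> syntheme e \<longleftrightarrow> edge_avoids e m"
proof -
  have "{m, 6} \<noteq> Rep_pvert A" for A using Rep_pvert_subset[of A] by auto
  then show "m \<in> {1..5} \<Longrightarrow> ?thesis" unfolding syntheme_def by (auto simp: doubleton_eq_iff)
qed

lemma syntheme_exists_inner:
  assumes "D \<subseteq> {1..5}" "D' \<subseteq> {1..5}" "card D = 2" "card D' = 2" "D \<inter> D' = {}"
  shows "\<exists>e. D \<in> syntheme e \<and> D' \<in> syntheme e"
proof -
  have Rep: "Rep_pvert (Abs_pvert D) = D" "Rep_pvert (Abs_pvert D') = D'"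
    using assms by (simp_all add: Abs_pvert_inverse)
  then have "adjacent (Abs_pvert D) (Abs_pvert D')" using assms(5) by simp
  then have "D \<in> syntheme (edge (Abs_pvert D) (Abs_pvert D'))" "D' \<in> syntheme (edge (Abs_pvert D) (Abs_pvert D'))"
    unfolding syntheme_def by (simp_all add: Rep_edge Rep)
  then show ?thesis by blast
qed

lemma syntheme_exists_six:
  assumes "m \<in> {1..5}" "D \<subseteq> {1..5}" "card D = 2" "m \<notin> D"
  shows "\<exists>e. {m, 6} \<in> syntheme e \<and> D \<in> syntheme e"
proof -
  define R where "R = {1..5} - insert m D"
  have "finite D" using assms(2) finite_subset by blast
  with assms have "insert m D \<subseteq> {1..5}" "card (insert m D) = 3" by auto
  with \<open>finite D\<close> have "card R = 2" unfolding R_def by (simp add: card_Diff_subset)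
  moreover have "R \<subseteq> {1..5}" "D \<inter> R = {}" unfolding R_def by auto
  ultimately obtain e where e: "D \<in> syntheme e" "R \<in> syntheme e"
    using syntheme_exists_inner[of D R] assms by blast
  obtain A B where AB: "adjacent A B" "e = edge A B" by (rule pedge_cases)
  then obtain m' where m': "m' \<in> {1..5}" "m' \<notin> Rep_pvert A" "m' \<notin> Rep_pvert B"
    "syntheme e = {Rep_pvert A, Rep_pvert B, {m', 6}}" by (elim syntheme_edge) simp
  have "{m', 6} \<noteq> D" "{m', 6} \<noteq> R" using assms(2) \<open>R \<subseteq> {1..5}\<close> by auto
  with e m'(4) have "D \<in> {Rep_pvert A, Rep_pvert B}" "R \<in> {Rep_pvert A, Rep_pvert B}" by auto
  moreover have "D \<noteq> R" using \<open>D \<inter> R = {}\<close> assms(3) by auto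
  ultimately have "D \<union> R = Rep_pvert A \<union> Rep_pvert B" by blast
  then have "m' \<notin> D \<union> R" using m' by auto
  then have "m' = m" using m' assms unfolding R_def by auto
  with e m' show ?thesis by auto
qed

lemma syntheme_exists:
  assumes "i \<in> {1..6}" "j \<in> {1..6}" "k \<in> {1..6}" "l \<in> {1..6}" "i \<noteq> j" "k \<noteq> l"
    "{i, j} \<inter> {k, l} = {}"
  shows "\<exists>e. {i, j} \<in> syntheme e \<and> {k, l} \<in> syntheme e"
proof -
  have "{1..6::nat} = insert 6 {1..5}" by auto
  then have range: "x \<in> {1..5}" if "x \<in> {1..6}" "x \<noteq> 6" for x :: nat using that by blast
  have six: "\<exists>e. {p, q} \<in> syntheme e \<and> {k', l'} \<in> syntheme e"
    if "q = 6" "p \<in> {1..5}" "k' \<in> {1..5}" "l' \<in> {1..5}" "k' \<noteq> l'" "p \<notin> {k', l'}" for p q k' l'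
    using syntheme_exists_six[of p "{k', l'}"] that by auto
  consider "6 \<notin> {i, j, k, l}" | "i = 6" | "j = 6" | "k = 6" | "l = 6" by blast
  then show ?thesis
  proof cases
    case 1
    then have "i \<in> {1..5}" "j \<in> {1..5}" "k \<in> {1..5}" "l \<in> {1..5}" using range assms(1-4) by blast+
    with assms show ?thesis by (intro syntheme_exists_inner) auto
  next
    case 2
    with assms have r: "j \<in> {1..5}" "k \<in> {1..5}" "l \<in> {1..5}" using range by blast+
    have "j \<notin> {k, l}" using 2 assms by auto
    from six[OF 2 r assms(6) this] obtain e where "{j, i} \<in> syntheme e" "{k, l} \<in> syntheme e"
      by blast
    then show ?thesis by (auto simp: insert_commute)
  next
    case 3
    with assms have r: "i \<in> {1..5}" "k \<in> {1..5}" "l \<in> {1..5}" using range by blast+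
    have "i \<notin> {k, l}" using 3 assms by auto
    from six[OF 3 r assms(6) this] obtain e where "{i, j} \<in> syntheme e" "{k, l} \<in> syntheme e"
      by blast
    then show ?thesis by (auto simp: insert_commute)
  next
    case 4
    with assms have r: "i \<in> {1..5}" "j \<in> {1..5}" "l \<in> {1..5}" using range by blast+
    have "l \<notin> {i, j}" using 4 assms by auto
    from six[OF 4 r(3,1,2) assms(5) this] obtain e where "{l, k} \<in> syntheme e" "{i, j} \<in> syntheme e"
      by blast
    then show ?thesis by (auto simp: insert_commute)
  next
    case 5
    with assms have r: "i \<in> {1..5}" "j \<in> {1..5}" "k \<in> {1..5}" using range by blast+
    have "k \<notin> {i, j}" using 5 assms by auto
    from six[OF 5 r(3,1,2) assms(5) this] obtain e where "{k, l} \<in> syntheme e" "{i, j} \<in> syntheme e"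
      by blast
    then show ?thesis by (auto simp: insert_commute)
  qed
qed

lemma edge_sum_u_el:
  assumes two: "(2::'a::field) \<noteq> 0"
  shows "edge_sum (fst (u_el i :: 'a np)) e = (if edge_avoids e i then 1 else 0)"
proof (cases e rule: pedge_cases)
  case (1 A B)
  then have "i \<notin> Rep_pvert A \<or> i \<notin> Rep_pvert B" by blast
  with 1 two show ?thesis
    by (auto simp: edge_sum_edge edge_avoids_def fst_u_el Rep_edge field_simps)
qed

lemma edge_sum_bold:
  assumes two: "(2::'a::field) \<noteq> 0" and ij: "i \<in> {1..6}" "j \<in> {1..6}" "i \<noteq> j"
  shows "edge_sum (fst (bold i j :: 'a np)) e = (if {i, j} \<in> syntheme e then 1 else 0)"
proof -
  consider "i \<in> {1..5}" "j \<in> {1..5}" | "i \<in> {1..5}" "j = 6" | "i = 6" "j \<in> {1..5}"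
    using ij by fastforce
  then show ?thesis
  proof cases
    case 1
    with ij show ?thesis by (simp add: bold_vtx edge_sum_vtx vert_in_syntheme_iff)
  next
    case 2
    then show ?thesis by (simp add: bold_u_el edge_sum_u_el[OF two] six_in_syntheme_iff)
  next
    case 3
    then show ?thesis
      by (simp add: bold_u_el edge_sum_u_el[OF two] six_in_syntheme_iff insert_commute[of 6 j])
  qed
qed

lemma syntheme_separates:
  assumes "i \<in> {1..6}" "j \<in> {1..6}" "k \<in> {1..6}" "l \<in> {1..6}" "i \<noteq> j" "k \<noteq> l"
    "{i, j} \<noteq> {k, l}"
  shows "\<exists>e. {i, j} \<in> syntheme e \<and> {k, l} \<notin> syntheme e"
proof (cases "{i, j} \<inter> {k, l} = {}")
  case True
  then have "card ({1..6::nat} - {i, j, k, l}) = 2"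
    using assms by (simp add: card_Diff_subset)
  then obtain g where g: "g \<in> {1..6}" "g \<notin> {i, j, k, l}"
    by (metis Diff_iff all_not_in_conv card.empty zero_neq_numeral)
  with True assms obtain e where e: "{i, j} \<in> syntheme e" "{k, g} \<in> syntheme e"
    using syntheme_exists[of i j k g] by auto
  have "{k, l} \<notin> syntheme e"
  proof
    assume "{k, l} \<in> syntheme e"
    with e(2) g have "{k, l} \<inter> {k, g} = {}" by (intro syntheme_disjoint) (auto simp: doubleton_eq_iff)
    then show False by blast
  qed
  with e show ?thesis by blast
next
  case False
  have "card ({1..6::nat} - {i, j}) = 4" using assms by (simp add: card_Diff_subset)
  then have "\<not> (\<forall>p\<in>{1..6::nat} - {i, j}. \<forall>q\<in>{1..6::nat} - {i, j}. p = q)"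
    using card_le_Suc0_iff_eq[of "{1..6::nat} - {i, j}"] by simp
  then obtain p q where pq: "p \<in> {1..6} - {i, j}" "q \<in> {1..6} - {i, j}" "p \<noteq> q" by blast
  with assms obtain e where e: "{i, j} \<in> syntheme e" "{p, q} \<in> syntheme e"
    using syntheme_exists[of i j p q] by auto
  have "{k, l} \<notin> syntheme e" using syntheme_disjoint[OF e(1)] False assms(7) by blast
  with e show ?thesis by blast
qed

lemma bold_eq_scale_imp:
  assumes two: "(2::'a::field) \<noteq> 0"
    and ij: "i \<in> {1..6}" "j \<in> {1..6}" "k \<in> {1..6}" "l \<in> {1..6}" "i \<noteq> j" "k \<noteq> l"
    and eq: "(bold i j :: 'a np) = np_scale c (bold k l)"
  shows "{i, j} = {k, l}"
proof (rule ccontr)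
  assume "{i, j} \<noteq> {k, l}"
  then obtain e where e: "{i, j} \<in> syntheme e" "{k, l} \<notin> syntheme e"
    using syntheme_separates ij by blast
  from eq have "edge_sum (fst (bold i j :: 'a np)) e = c * edge_sum (fst (bold k l :: 'a np)) e"
    by (simp add: np_scale_def edge_sum_scale)
  with e show False by (simp add: edge_sum_bold[OF two ij(1,2,5)] edge_sum_bold[OF two ij(3,4,6)])
qed

lemma np_mult_bold_eq_zero_iff:
  assumes two: "(2::'a::field) \<noteq> 0"
    and ij: "i \<in> {1..6}" "j \<in> {1..6}" "k \<in> {1..6}" "l \<in> {1..6}" "i \<noteq> j" "k \<noteq> l"
    and ne: "{i, j} \<noteq> {k, l}"
  shows "np_mult (bold i j) (bold k l) = (np_zero :: 'a np) \<longleftrightarrow> {i, j} \<inter> {k, l} \<noteq> {}"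
proof -
  have "np_mult (bold i j) (bold k l) = (np_zero :: 'a np)
      \<longleftrightarrow> (\<forall>e. \<not> ({i, j} \<in> syntheme e \<and> {k, l} \<in> syntheme e))"
    unfolding np_mult_edge_sum np_zero_def
    by (auto simp: edge_sum_bold[OF two ij(1,2,5)] edge_sum_bold[OF two ij(3,4,6)] fun_eq_iff)
  also have "\<dots> \<longleftrightarrow> {i, j} \<inter> {k, l} \<noteq> {}"
    using syntheme_exists[OF ij] syntheme_disjoint[of "{i, j}" _ "{k, l}"] ne by blast
  finally show ?thesis .
qed

lemma pairwise_meeting_pairs_common_point:
  assumes card: "card S \<ge> 4" and pairs: "\<forall>D\<in>S. \<exists>a b. a \<noteq> b \<and> D = {a, b}"
    and meet: "\<forall>D\<in>S. \<forall>D'\<in>S. D \<inter> D' \<noteq> {}"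
  shows "\<exists>k. \<forall>D\<in>S. k \<in> D"
proof (rule ccontr)
  assume nk: "\<not> (\<exists>k. \<forall>D\<in>S. k \<in> D)"
  have "S \<noteq> {}" using card by auto
  then obtain D0 where D0: "D0 \<in> S" by blast
  then obtain a b where ab: "a \<noteq> b" "D0 = {a, b}" using pairs by blast
  obtain D1 where D1: "D1 \<in> S" "a \<notin> D1" using nk by blast
  obtain D2 where D2: "D2 \<in> S" "b \<notin> D2" using nk by blast
  obtain x1 y1 where xy1: "x1 \<noteq> y1" "D1 = {x1, y1}" using pairs D1 by blast
  obtain x2 y2 where xy2: "x2 \<noteq> y2" "D2 = {x2, y2}" using pairs D2 by blast
  have "b \<in> D1" using meet D0 D1 ab by auto
  then obtain c where c: "D1 = {b, c}" "c \<noteq> b" "c \<noteq> a" using xy1 D1(2) by auto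
  have "a \<in> D2" using meet D0 D2 ab by auto
  then obtain c' where c': "D2 = {a, c'}" "c' \<noteq> a" "c' \<noteq> b" using xy2 D2(2) by auto
  have "c = c'" using meet D1 D2 c c' ab by auto
  have "card {D0, D1, D2} \<le> 3" using card_length[of "[D0, D1, D2]"] by simp
  then have "\<not> S \<subseteq> {D0, D1, D2}" using card card_mono[of "{D0, D1, D2}" S] by auto
  then obtain D3 where D3: "D3 \<in> S" "D3 \<notin> {D0, D1, D2}" by blast
  obtain x y where xy: "x \<noteq> y" "D3 = {x, y}" using pairs D3 by blast
  have "D3 \<inter> {a, b} \<noteq> {}" "D3 \<inter> {b, c} \<noteq> {}" "D3 \<inter> {a, c} \<noteq> {}"
    using meet D0 D1 D2 D3 ab c c' \<open>c = c'\<close> by auto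
  then have "D3 \<in> {{a, b}, {b, c}, {a, c}}" using xy ab c by (auto simp: doubleton_eq_iff)
  then show False using D3 ab c c' \<open>c = c'\<close> by (auto simp: insert_commute)
qed

section \<open>The action on the six families\<close>

lemma FF_eq: "FF i = (\<lambda>j. span1 (bold i j)) ` ({1..6} - {i})"
  unfolding FF_def by auto

lemma bold_eq_aut_vtx:
  assumes two: "(2::'a::field) \<noteq> 0" and ij: "i \<in> {1..6}" "j \<in> {1..6}" "i \<noteq> j"
  shows "\<exists>\<psi> A. \<psi> \<in> autNP \<and> (bold i j :: 'a np) = \<psi> (vtx A)"
proof -
  have to_6: "\<exists>\<psi> A. \<psi> \<in> autNP \<and> (bold i 6 :: 'a np) = \<psi> (vtx A)" if i: "i \<in> {1..5}" for i
  proof -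
    define x where "x = (if i = 1 then 2 else (1::nat))"
    have x: "x \<in> {1..5}" "x \<noteq> i" unfolding x_def using i by auto
    obtain \<psi> :: "'a np \<Rightarrow> 'a np" where "relabels \<psi> (Transposition.transpose x 6)"
      using relabels_transpose[OF two, of x 6] x by auto
    with x i have "\<psi> \<in> autNP" "\<psi> (vtx (vert i x)) = bold i 6"
      unfolding relabels_def by (auto simp: bold_vtx[symmetric])
    then show ?thesis by metis
  qed
  consider "i \<in> {1..5}" "j \<in> {1..5}" | "i \<in> {1..5}" "j = 6" | "i = 6" "j \<in> {1..5}"
    using ij by fastforce
  then show ?thesis
  proof cases
    case 1
    then show ?thesis using aut_id bold_vtx by (metis id_apply)
  next
    case 2
    then show ?thesis using to_6 by simp
  next
    case 3
    then show ?thesis using to_6 bold_commute ij by metis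
  qed
qed

lemma aut_bold_scaled_bold:
  assumes two: "(2::'a::field) \<noteq> 0" and \<phi>: "\<phi> \<in> autNP" and ij: "i \<in> {1..6}" "j \<in> {1..6}" "i \<noteq> j"
  shows "\<exists>k\<in>{1..6}. \<exists>l\<in>{1..6}. k \<noteq> l \<and> (\<exists>c. c \<noteq> 0 \<and> \<phi> (bold i j) = np_scale c (bold k l :: 'a np))"
proof -
  obtain \<psi> A where \<psi>: "\<psi> \<in> autNP" "(bold i j :: 'a np) = \<psi> (vtx A)"
    using bold_eq_aut_vtx[OF two ij] by blast
  show ?thesis using aut_vtx_scaled_bold[OF two aut_comp[OF \<phi> \<psi>(1)], of A] \<psi>(2) by simp
qed

lemma aut_bold_star_pairs:
  fixes \<phi> :: "'a::field np \<Rightarrow> 'a np"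
  assumes two: "(2::'a) \<noteq> 0" and \<phi>: "\<phi> \<in> autNP" and i: "i \<in> {1..6}"
  shows "\<exists>K L C. (\<forall>j\<in>{1..6} - {i}. K j \<in> {1..6} \<and> L j \<in> {1..6} \<and> K j \<noteq> L j \<and> C j \<noteq> 0
      \<and> \<phi> (bold i j) = np_scale (C j) (bold (K j) (L j)))
    \<and> inj_on (\<lambda>j. {K j, L j}) ({1..6} - {i})
    \<and> (\<forall>j\<in>{1..6} - {i}. \<forall>j'\<in>{1..6} - {i}. {K j, L j} \<inter> {K j', L j'} \<noteq> {})"
proof -
  have "\<forall>j\<in>{1..6} - {i}. \<exists>k l c. k \<in> {1..6} \<and> l \<in> {1..6} \<and> k \<noteq> l \<and> c \<noteq> 0
      \<and> \<phi> (bold i j) = np_scale c (bold k l)"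
    using aut_bold_scaled_bold[OF two \<phi> i] by blast
  then obtain K L C where KLC: "\<And>j. j \<in> {1..6} - {i} \<Longrightarrow> K j \<in> {1..6} \<and> L j \<in> {1..6} \<and> K j \<noteq> L j
      \<and> C j \<noteq> 0 \<and> \<phi> (bold i j) = np_scale (C j) (bold (K j) (L j))"
    by metis
  have inj: "inj_on (\<lambda>j. {K j, L j}) ({1..6} - {i})"
  proof (rule inj_onI)
    fix j j' assume j: "j \<in> {1..6} - {i}" and j': "j' \<in> {1..6} - {i}" and eq: "{K j, L j} = {K j', L j'}"
    with KLC[OF j] KLC[OF j'] have "bold (K j) (L j) = (bold (K j') (L j') :: 'a np)"
      by (auto simp: doubleton_eq_iff bold_commute)
    with KLC[OF j] KLC[OF j'] have "\<phi> (bold i j) = np_scale (C j / C j') (\<phi> (bold i j'))"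
      by (simp add: np_scale_scale)
    then have "bold i j = np_scale (C j / C j') (bold i j' :: 'a np)"
      by (simp add: aut_scale[OF \<phi>, symmetric] aut_eq_iff[OF \<phi>])
    then have "{i, j} = {i, j'}" using bold_eq_scale_imp[OF two] i j j' by blast
    with j j' show "j = j'" by (auto simp: doubleton_eq_iff)
  qed
  have "{K j, L j} \<inter> {K j', L j'} \<noteq> {}" if j: "j \<in> {1..6} - {i}" and j': "j' \<in> {1..6} - {i}" for j j'
  proof (cases "j = j'")
    case False
    have r: "K j \<in> {1..6}" "L j \<in> {1..6}" "K j' \<in> {1..6}" "L j' \<in> {1..6}" "K j \<noteq> L j" "K j' \<noteq> L j'"
      using KLC[OF j] KLC[OF j'] by auto
    have ne: "{K j, L j} \<noteq> {K j', L j'}" using False inj_onD[OF inj _ j j'] by blast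
    from False j j' i have "np_mult (bold i j) (bold i j') = (np_zero :: 'a np)"
      by (subst np_mult_bold_eq_zero_iff[OF two]) (auto simp: doubleton_eq_iff)
    then have "np_scale (C j * C j') (np_mult (bold (K j) (L j)) (bold (K j') (L j'))) = (np_zero :: 'a np)"
      using KLC[OF j] KLC[OF j'] by (metis aut_mult[OF \<phi>] aut_zero[OF \<phi>] np_mult_scale)
    then have "np_mult (bold (K j) (L j)) (bold (K j') (L j')) = (np_zero :: 'a np)"
      using KLC[OF j] KLC[OF j'] by (simp add: np_scale_eq_zero_iff)
    then show ?thesis by (simp add: np_mult_bold_eq_zero_iff[OF two r ne])
  qed simp
  with KLC inj show ?thesis by blast
qed

lemma aut_FF_star:
  fixes \<phi> :: "'a::field np \<Rightarrow> 'a np"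
  assumes two: "(2::'a) \<noteq> 0" and \<phi>: "\<phi> \<in> autNP" and i: "i \<in> {1..6}"
  shows "\<exists>k\<in>{1..6}. \<exists>l. l ` ({1..6} - {i}) = {1..6} - {k} \<and>
    (\<forall>j\<in>{1..6} - {i}. \<phi> ` span1 (bold i j) = span1 (bold k (l j)))"
proof -
  let ?J = "{1..6::nat} - {i}"
  obtain K L C where KLC: "\<forall>j\<in>?J. K j \<in> {1..6} \<and> L j \<in> {1..6} \<and> K j \<noteq> L j \<and> C j \<noteq> 0
      \<and> \<phi> (bold i j) = np_scale (C j) (bold (K j) (L j))"
    and inj: "inj_on (\<lambda>j. {K j, L j}) ?J"
    and meet: "\<forall>j\<in>?J. \<forall>j'\<in>?J. {K j, L j} \<inter> {K j', L j'} \<noteq> {}"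
    using aut_bold_star_pairs[OF two \<phi> i] by blast
  let ?S = "(\<lambda>j. {K j, L j}) ` ?J"
  have "card ?S = 5" using card_image[OF inj] i by simp
  moreover have "\<forall>D\<in>?S. \<exists>a b. a \<noteq> b \<and> D = {a, b}" using KLC by blast
  moreover have "\<forall>D\<in>?S. \<forall>D'\<in>?S. D \<inter> D' \<noteq> {}" using meet by blast
  ultimately have "\<exists>k. \<forall>D\<in>?S. k \<in> D" by (intro pairwise_meeting_pairs_common_point) auto
  then obtain k where k: "\<forall>D\<in>?S. k \<in> D" by blast
  define l where "l j = (if K j = k then L j else K j)" for j
  have pair: "{K j, L j} = {k, l j}" "l j \<noteq> k" "l j \<in> {1..6}" "k \<in> {1..6}" if "j \<in> ?J" for j
    using k KLC[rule_format, OF that] that unfolding l_def by auto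
  have bold_eq: "bold (K j) (L j) = (bold k (l j) :: 'a np)" if "j \<in> ?J" for j
  proof (cases "K j = k")
    case False
    with pair(1)[OF that] have "L j = k" unfolding l_def by (auto simp: doubleton_eq_iff)
    moreover have "K j \<in> {1..6}" "k \<in> {1..6}" using KLC[rule_format, OF that] pair(4)[OF that] by auto
    ultimately show ?thesis using False unfolding l_def by (simp add: bold_commute)
  qed (simp add: l_def)
  have "inj_on l ?J"
  proof (rule inj_onI)
    fix j j' assume j: "j \<in> ?J" and j': "j' \<in> ?J" and "l j = l j'"
    then have "{K j, L j} = {K j', L j'}" by (simp add: pair(1))
    with inj j j' show "j = j'" by (blast dest: inj_onD)
  qed
  moreover have "(if i = 1 then 2 else 1) \<in> ?J" using i by auto
  then have k6: "k \<in> {1..6}" by (rule pair(4))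
  ultimately have "card (l ` ?J) = card ({1..6} - {k})" using i by (simp add: card_image)
  moreover have "l ` ?J \<subseteq> {1..6} - {k}" using pair(2,3) by blast
  ultimately have "l ` ?J = {1..6} - {k}" by (intro card_subset_eq) auto
  moreover have "\<phi> ` span1 (bold i j) = span1 (bold k (l j))" if "j \<in> ?J" for j
    using KLC[rule_format, OF that] bold_eq[OF that] by (simp add: aut_image_span1[OF \<phi>] span1_scale)
  ultimately show ?thesis using k6 by blast
qed

lemma lines_img_FF:
  fixes \<phi> :: "'a::field np \<Rightarrow> 'a np"
  assumes two: "(2::'a) \<noteq> 0" and \<phi>: "\<phi> \<in> autNP" and i: "i \<in> {1..6}"
  shows "\<exists>k\<in>{1..6}. lines_img \<phi> (FF i) = FF k"
proof -
  obtain k l where k: "k \<in> {1..6}" and l: "l ` ({1..6} - {i}) = {1..6} - {k}"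
    and span: "\<forall>j\<in>{1..6} - {i}. \<phi> ` span1 (bold i j) = span1 (bold k (l j))"
    using aut_FF_star[OF two \<phi> i] by blast
  have "lines_img \<phi> (FF i) = (\<lambda>j. span1 (bold k (l j))) ` ({1..6} - {i})"
    unfolding lines_img_def FF_eq image_image using span by (intro image_cong) auto
  also have "\<dots> = FF k" unfolding FF_eq l[symmetric] image_image ..
  finally show ?thesis using k by blast
qed

lemma span1_eq_imp: "span1 x = span1 y \<Longrightarrow> \<exists>c. x = np_scale c y"
  using span1_self unfolding span1_def by blast

lemma span1_bold_inj:
  assumes two: "(2::'a::field) \<noteq> 0"
    and ij: "i \<in> {1..6}" "j \<in> {1..6}" "k \<in> {1..6}" "l \<in> {1..6}" "i \<noteq> j" "k \<noteq> l"
    and eq: "span1 (bold i j :: 'a np) = span1 (bold k l)"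
  shows "{i, j} = {k, l}"
  using span1_eq_imp[OF eq] bold_eq_scale_imp[OF two ij] by blast

lemma FF_mem: "i \<in> {1..6} \<Longrightarrow> j \<in> {1..6} \<Longrightarrow> i \<noteq> j \<Longrightarrow> span1 (bold i j) \<in> FF i"
  unfolding FF_def by auto

lemma FF_memD: "L \<in> FF i \<Longrightarrow> \<exists>k. k \<in> {1..6} \<and> k \<noteq> i \<and> L = span1 (bold i k)"
  unfolding FF_def by auto

lemma aut_fixing_FF_bold:
  fixes \<phi> :: "'a::field np \<Rightarrow> 'a np"
  assumes two: "(2::'a) \<noteq> 0" and fixed: "\<And>k. k \<in> {1..6} \<Longrightarrow> lines_img \<phi> (FF k) = FF k"
    and ij: "i \<in> {1..6}" "j \<in> {1..6}" "i \<noteq> j"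
  shows "\<exists>c. \<phi> (bold i j) = np_scale c (bold i j)"
proof -
  let ?L = "span1 (bold i j :: 'a np)"
  have "\<phi> ` ?L \<in> lines_img \<phi> (FF i)" unfolding lines_img_def using FF_mem[OF ij] by blast
  with fixed ij obtain k where k: "k \<in> {1..6}" "k \<noteq> i" "\<phi> ` ?L = span1 (bold i k)"
    using FF_memD by force
  have "?L \<in> FF j" using FF_mem[OF ij(2,1) ij(3)[symmetric]] by (simp add: bold_commute[OF ij(1,2)])
  then have "\<phi> ` ?L \<in> lines_img \<phi> (FF j)" unfolding lines_img_def by blast
  with fixed ij obtain l where l: "l \<in> {1..6}" "l \<noteq> j" "\<phi> ` ?L = span1 (bold j l)"
    using FF_memD by force
  have "{i, k} = {j, l}" using span1_bold_inj[OF two ij(1) k(1) ij(2) l(1)] k l ij by metis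
  with ij(3) have "k = j" by (auto simp: doubleton_eq_iff)
  with k have "\<phi> (bold i j) \<in> ?L" using span1_self by blast
  then show ?thesis unfolding span1_def by blast
qed

lemma fst_np_sum_vtx: "fst (np_sum (\<lambda>A. np_scale (g A) (vtx A :: 'a::field np)) UNIV) B = g B"
  unfolding np_sum_def np_scale_def vtx_def by (simp add: if_distrib cong: if_cong)

lemma aut_fixing_FF_scalar:
  fixes \<phi> :: "'a::field np \<Rightarrow> 'a np"
  assumes two: "(2::'a) \<noteq> 0" and \<phi>: "\<phi> \<in> autNP"
    and fixed: "\<And>k. k \<in> {1..6} \<Longrightarrow> lines_img \<phi> (FF k) = FF k"
  shows "\<exists>\<alpha>. \<alpha> \<noteq> 0 \<and> \<phi> = scalar_aut \<alpha>"
proof -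
  have "\<exists>c. \<phi> (vtx A) = np_scale c (vtx A)" for A
  proof -
    obtain x y where "x \<noteq> y" "x \<in> {1..5}" "y \<in> {1..5}" "A = vert x y" by (rule pvert_cases)
    then show ?thesis using aut_fixing_FF_bold[OF two fixed, of x y] by (simp add: bold_vtx)
  qed
  then obtain c where c: "\<And>A. \<phi> (vtx A) = np_scale (c A) (vtx A)" by metis
  obtain d where d: "\<phi> (u_el 1) = np_scale d (u_el 1 :: 'a np)"
    using aut_fixing_FF_bold[OF two fixed, of 1 6] by (auto simp: bold_u_el)
  have u1: "u_el 1 \<in> (U_P :: 'a np set)" unfolding U_P_def u_el_def by simp
  have c_eq_d: "c B = d" for B
  proof -
    have "fst (\<phi> (u_el 1)) B = fst (np_sum (\<lambda>A. np_scale (fst (u_el 1 :: 'a np) A) (\<phi> (vtx A))) UNIV) B"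
      by (simp only: aut_U_expand[OF \<phi> u1])
    also have "\<dots> = fst (np_sum (\<lambda>A. np_scale (fst (u_el 1 :: 'a np) A * c A) (vtx A)) UNIV) B"
      by (simp only: c np_scale_scale)
    also have "\<dots> = fst (u_el 1 :: 'a np) B * c B" by (rule fst_np_sum_vtx)
    finally have "fst (\<phi> (u_el 1)) B = fst (u_el 1 :: 'a np) B * c B" .
    moreover have "fst (\<phi> (u_el 1)) B = d * fst (u_el 1 :: 'a np) B"
      using d by (simp add: np_scale_def)
    moreover have "fst (u_el 1 :: 'a np) B \<noteq> 0" using two by (simp add: fst_u_el)
    ultimately show ?thesis by simp
  qed
  have "d \<noteq> 0"
  proof
    assume "d = 0"
    then have "\<phi> (vtx A) = np_zero" for A by (simp add: c c_eq_d np_scale_zero)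
    then show False using aut_eq_zero_iff[OF \<phi>] vtx_neq_zero by metis
  qed
  moreover have "\<phi> = scalar_aut d"
    using \<phi> scalar_aut_autNP[OF \<open>d \<noteq> 0\<close>] by (rule aut_eqI_vtx) (simp add: c c_eq_d scalar_aut_U vtx_in_U)
  ultimately show ?thesis by blast
qed

lemma inj_on_FF:
  assumes two: "(2::'a::field) \<noteq> 0"
  shows "inj_on (FF :: nat \<Rightarrow> 'a np set set) {1..6}"
proof (rule inj_onI, rule ccontr)
  fix i j assume ij: "i \<in> {1..6}" "j \<in> {1..6}" "(FF i :: 'a np set set) = FF j" "i \<noteq> j"
  have "card ({1..6::nat} - {i, j}) = 4" using ij by (simp add: card_Diff_subset)
  then obtain k where k: "k \<in> {1..6::nat} - {i, j}" by (metis card.empty ex_in_conv zero_neq_numeral)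
  have "span1 (bold i k :: 'a np) \<in> FF j" using FF_mem[of i k] ij k by auto
  then obtain l where l: "l \<in> {1..6}" "l \<noteq> j" "span1 (bold i k :: 'a np) = span1 (bold j l)"
    using FF_memD by blast
  have "{i, k} = {j, l}" using span1_bold_inj[OF two _ _ _ _ _ _ l(3)] ij k l by auto
  then show False using ij k by (auto simp: doubleton_eq_iff)
qed

lemma card_FFs:
  assumes two: "(2::'a::field) \<noteq> 0"
  shows "card (FFs :: 'a np set set set) = 6"
  unfolding FFs_def using card_image[OF inj_on_FF[OF two]] by simp

lemma lines_img_FFs:
  assumes two: "(2::'a::field) \<noteq> 0" and \<phi>: "\<phi> \<in> (autNP :: ('a np \<Rightarrow> 'a np) set)" and S: "S \<in> FFs"
  shows "lines_img \<phi> S \<in> FFs"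
  using S lines_img_FF[OF two \<phi>] unfolding FFs_def by blast

lemma lines_img_comp: "lines_img \<phi> (lines_img \<psi> S) = lines_img (\<phi> \<circ> \<psi>) S"
  unfolding lines_img_def by (simp add: image_image image_comp)

lemma lines_img_id: "lines_img id S = S"
  unfolding lines_img_def by simp

lemma rhoF_Bij:
  assumes two: "(2::'a::field) \<noteq> 0" and \<phi>: "\<phi> \<in> (autNP :: ('a np \<Rightarrow> 'a np) set)"
  shows "rhoF \<phi> \<in> Bij FFs"
proof -
  let ?\<psi> = "inv_into UNIV \<phi>"
  have "?\<psi> \<circ> \<phi> = id" "\<phi> \<circ> ?\<psi> = id" using aut_inv_apply[OF \<phi>] by (simp_all add: fun_eq_iff)
  then have "bij_betw (lines_img \<phi>) FFs FFs"
    using lines_img_FFs[OF two \<phi>] lines_img_FFs[OF two aut_inv[OF \<phi>]]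
    by (intro bij_betw_byWitness[where f' = "lines_img ?\<psi>"]) (auto simp: lines_img_comp lines_img_id)
  then have "bij_betw (rhoF \<phi>) FFs FFs" unfolding rhoF_def by (rule bij_betw_cong[THEN iffD1, rotated]) simp
  then show ?thesis unfolding Bij_def rhoF_def by simp
qed

lemma rhoF_comp:
  assumes two: "(2::'a::field) \<noteq> 0" and \<phi>: "\<phi> \<in> (autNP :: ('a np \<Rightarrow> 'a np) set)" and \<psi>: "\<psi> \<in> autNP"
  shows "rhoF (\<phi> \<circ> \<psi>) = compose FFs (rhoF \<phi>) (rhoF \<psi>)"
  using lines_img_FFs[OF two \<psi>] unfolding rhoF_def compose_def
  by (auto simp: fun_eq_iff lines_img_comp)

lemma rhoF_hom:
  assumes two: "(2::'a::field) \<noteq> 0"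
  shows "(rhoF :: ('a np \<Rightarrow> 'a np) \<Rightarrow> _) \<in> hom AutNP (BijGroup FFs)"
proof (rule homI)
  show "rhoF \<phi> \<in> carrier (BijGroup FFs)" if "\<phi> \<in> carrier AutNP" for \<phi> :: "'a np \<Rightarrow> 'a np"
    using that rhoF_Bij[OF two] unfolding AutNP_def BijGroup_def by simp
  show "rhoF (\<phi> \<otimes>\<^bsub>AutNP\<^esub> \<psi>) = rhoF \<phi> \<otimes>\<^bsub>BijGroup FFs\<^esub> rhoF \<psi>"
    if "\<phi> \<in> carrier AutNP" "\<psi> \<in> carrier AutNP" for \<phi> \<psi> :: "'a np \<Rightarrow> 'a np"
    using that rhoF_Bij[OF two] rhoF_comp[OF two] unfolding AutNP_def BijGroup_def by simp
qed

lemma relabels_lines_img_FF: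
  assumes "relabels \<psi> p" "k \<in> {1..6}"
  shows "lines_img \<psi> (FF k) = FF (p k)"
proof -
  have \<psi>: "\<psi> \<in> autNP" and p: "p permutes {1..6}"
    and b: "\<forall>i\<in>{1..6}. \<forall>j\<in>{1..6}. i \<noteq> j \<longrightarrow> \<psi> (bold i j) = bold (p i) (p j)"
    using assms(1) unfolding relabels_def by auto
  have "p ` ({1..6} - {k}) = p ` {1..6} - p ` {k}"
    by (rule inj_on_image_set_diff[OF permutes_inj_on[OF p]]) (use assms(2) in auto)
  then have p_image: "p ` ({1..6} - {k}) = {1..6} - {p k}" using permutes_image[OF p] by simp
  have "lines_img \<psi> (FF k) = (\<lambda>j. span1 (bold (p k) (p j))) ` ({1..6} - {k})"
    unfolding lines_img_def FF_eq image_image using b assms(2)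
    by (intro image_cong) (auto simp: aut_image_span1[OF \<psi>])
  also have "\<dots> = (\<lambda>j. span1 (bold (p k) j)) ` (p ` ({1..6} - {k}))"
    by (simp only: image_image)
  also have "\<dots> = FF (p k)" unfolding FF_eq p_image ..
  finally show ?thesis .
qed

lemma relabels_id: "relabels id id"
  unfolding relabels_def by (simp add: aut_id)

lemma relabels_exists:
  assumes two: "(2::'a::field) \<noteq> 0" and p: "p permutes {1..6}"
  shows "\<exists>\<psi> :: 'a np \<Rightarrow> 'a np. relabels \<psi> p"
  using p finite_atLeastAtMost[of 1 6]
proof (induction rule: permutes_induct)
  case id
  show ?case using relabels_id by blast
next
  case (swap a b p)
  then obtain \<psi> \<tau> :: "'a np \<Rightarrow> 'a np" where "relabels \<psi> p" "relabels \<tau> (Transposition.transpose a b)"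
    using relabels_transpose[OF two] by blast
  then show ?case using relabels_comp by blast
qed

lemma rhoF_surj:
  assumes two: "(2::'a::field) \<noteq> 0" and g: "g \<in> Bij (FFs :: 'a np set set set)"
  shows "g \<in> (rhoF :: ('a np \<Rightarrow> 'a np) \<Rightarrow> _) ` autNP"
proof -
  have FF: "bij_betw (FF :: nat \<Rightarrow> 'a np set set) {1..6} FFs"
    unfolding FFs_def using inj_on_FF[OF two] by (simp add: bij_betw_def)
  have g': "bij_betw g FFs FFs" and g_ext: "g \<in> extensional FFs" using g unfolding Bij_def by auto
  define p where "p k = (if k \<in> {1..6} then the_inv_into {1..6} FF (g (FF k)) else k)" for k
  have "bij_betw (the_inv_into {1..6} FF \<circ> g \<circ> FF) {1..6} {1..6}"
    using FF g' bij_betw_the_inv_into by (blast intro: bij_betw_trans)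
  then have "bij_betw p {1..6} {1..6}" unfolding p_def by (rule bij_betw_cong[THEN iffD1, rotated]) simp
  then have "p permutes {1..6}" by (rule bij_imp_permutes) (auto simp: p_def)
  then obtain \<psi> :: "'a np \<Rightarrow> 'a np" where \<psi>: "relabels \<psi> p" using relabels_exists[OF two] by blast
  have "rhoF \<psi> = g"
  proof (rule extensionalityI[OF _ g_ext])
    show "rhoF \<psi> \<in> extensional FFs" unfolding rhoF_def by simp
    fix S :: "'a np set set" assume "S \<in> FFs"
    then obtain k where k: "k \<in> {1..6}" "S = FF k" unfolding FFs_def by blast
    have "g (FF k) \<in> FF ` {1..6}" using g' k unfolding FFs_def bij_betw_def by blast
    then have "FF (p k) = g (FF k)"
      using k inj_on_FF[OF two] unfolding p_def by (simp add: f_the_inv_into_f)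
    with k \<open>S \<in> FFs\<close> show "rhoF \<psi> S = g S"
      unfolding rhoF_def by (simp add: relabels_lines_img_FF[OF \<psi>])
  qed
  with \<psi> show ?thesis unfolding relabels_def by blast
qed

lemma lines_img_scalar_aut_FF:
  assumes "\<alpha> \<noteq> (0::'a::field)" "k \<in> {1..6}"
  shows "lines_img (scalar_aut \<alpha>) (FF k :: 'a np set set) = FF k"
proof -
  have "span1 (scalar_aut \<alpha> (bold k j :: 'a np)) = span1 (bold k j)" if "j \<in> {1..6}" for j
  proof -
    have "bold k j \<in> (U_P :: 'a np set)"
      unfolding bold_def U_P_def vtx_def u_el_def by auto
    then show ?thesis using span1_scale[OF assms(1)] by (simp add: scalar_aut_U)
  qed
  then show ?thesis
    unfolding lines_img_def FF_eq image_image aut_image_span1[OF scalar_aut_autNP[OF assms(1)]]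
    by (intro image_cong) auto
qed

lemma kernel_rhoF:
  assumes two: "(2::'a::field) \<noteq> 0"
  shows "kernel AutNP (BijGroup FFs) (rhoF :: ('a np \<Rightarrow> 'a np) \<Rightarrow> _) = scalar_auts"
proof -
  have "rhoF \<phi> = (\<lambda>S\<in>FFs. S) \<longleftrightarrow> (\<forall>k\<in>{1..6}. lines_img \<phi> (FF k) = FF k)" for \<phi> :: "'a np \<Rightarrow> 'a np"
    unfolding rhoF_def FFs_def by (auto simp: fun_eq_iff restrict_def)
  then have "\<phi> \<in> kernel AutNP (BijGroup FFs) rhoF \<longleftrightarrow> \<phi> \<in> autNP \<and> (\<forall>k\<in>{1..6}. lines_img \<phi> (FF k) = FF k)"
    for \<phi> :: "'a np \<Rightarrow> 'a np"
    unfolding kernel_def AutNP_def BijGroup_def by simp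
  moreover have "\<phi> \<in> autNP \<and> (\<forall>k\<in>{1..6}. lines_img \<phi> (FF k) = FF k) \<longleftrightarrow> \<phi> \<in> scalar_auts"
    for \<phi> :: "'a np \<Rightarrow> 'a np"
  proof
    assume "\<phi> \<in> autNP \<and> (\<forall>k\<in>{1..6}. lines_img \<phi> (FF k) = FF k)"
    then obtain \<alpha> where "\<alpha> \<noteq> 0" "\<phi> = scalar_aut \<alpha>" using aut_fixing_FF_scalar[OF two] by blast
    then show "\<phi> \<in> scalar_auts" unfolding scalar_auts_def by blast
  next
    assume "\<phi> \<in> scalar_auts"
    then obtain \<alpha> where "\<alpha> \<noteq> 0" "\<phi> = scalar_aut \<alpha>" unfolding scalar_auts_def by blast
    then show "\<phi> \<in> autNP \<and> (\<forall>k\<in>{1..6}. lines_img \<phi> (FF k) = FF k)"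
      by (simp add: scalar_aut_autNP lines_img_scalar_aut_FF)
  qed
  ultimately show ?thesis by blast
qed

theorem theorem10p4:
  assumes char2: "(2::'a::field) \<noteq> 0"
  shows "card (FFs :: 'a np set set set) = 6
    \<and> (\<forall>\<phi>\<in>(autNP :: ('a np \<Rightarrow> 'a np) set). \<forall>S\<in>FFs. lines_img \<phi> S \<in> FFs)
    \<and> (rhoF :: ('a np \<Rightarrow> 'a np) \<Rightarrow> _) \<in> hom AutNP (BijGroup FFs)
    \<and> (rhoF :: ('a np \<Rightarrow> 'a np) \<Rightarrow> _) ` autNP = carrier (BijGroup FFs)
    \<and> kernel AutNP (BijGroup FFs) (rhoF :: ('a np \<Rightarrow> 'a np) \<Rightarrow> _) = scalar_auts"
proof (intro conjI)
  show "card (FFs :: 'a np set set set) = 6" by (rule card_FFs[OF char2])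
  show "\<forall>\<phi>\<in>(autNP :: ('a np \<Rightarrow> 'a np) set). \<forall>S\<in>FFs. lines_img \<phi> S \<in> FFs"
    using lines_img_FFs[OF char2] by blast
  show "(rhoF :: ('a np \<Rightarrow> 'a np) \<Rightarrow> _) \<in> hom AutNP (BijGroup FFs)" by (rule rhoF_hom[OF char2])
  show "(rhoF :: ('a np \<Rightarrow> 'a np) \<Rightarrow> _) ` autNP = carrier (BijGroup FFs)"
    using rhoF_Bij[OF char2] rhoF_surj[OF char2] unfolding BijGroup_def by auto
  show "kernel AutNP (BijGroup FFs) (rhoF :: ('a np \<Rightarrow> 'a np) \<Rightarrow> _) = scalar_auts"
    by (rule kernel_rhoF[OF char2])
qed

end
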